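(* Suppose Assumption 1 holds with $\alpha\in(0,1]$ and let $(f_t)_{t\in\mathbb N}$ be the online gradient descent iterates. If the step sizes satisfy $$\sum_{t=1}^\infty\eta_t=\infty\qquad\text{and}\qquad\sum_{t=1}^\infty\eta_t^{1+\alpha}<\infty,$$ then $\lim_{t\to\infty}\mathcal E(f_t)=\mathcal E(f_H)$ almost surely.
   Context: Setting: Let $\mathcal X\subset\mathbb R^d$, $\mathcal Y\subset\mathbb R$, $\mathcal Z=\mathcal X\times\mathcal Y$, and let $\rho$ be a Borel probability measure on $\mathcal Z$. Let $K:\mathcal X\times\mathcal X\to\mathbb R$ be a continuous, symmetric, positive semi-definite kernel with reproducing kernel Hilbert space $H_K$ (inner product $\langle\cdot,\cdot\rangle$, norm $\|\cdot\|$), $K_x:=K(x,\cdot)$, reproducing property $f(x)=\langle f,K_x\rangle$, and $\kappa:=\sup_{x\in\mathcal X}\sqrt{K(x,x)}<\infty$. Let $\phi:\mathcal Y\times\mathbb R\to[0,\infty)$ be a loss function, differentiable in its second argument, and write $\phi'(y,s)$ for its derivative with respect to $s$. The generalization error of $f:\mathcal X\to\mathbb R$ is $\mathcal E(f)=\int_{\mathcal Z}\phi(y,f(x))\,d\rho(x,y)$. It is assumed that a minimizer $f_H\in\arg\min_{f\in H_K}\mathcal E(f)$ exists and that $\max\{\sup_{y\in\mathcal Y}\phi(y,0),\ \sup_{(x,y)\in\mathcal Z}\phi(y,f_H(x))\}<\infty$. Let $z_t=(x_t,y_t)$, $t\in\mathbb N$, be i.i.d. samples from $\rho$, let $(\eta_t)_{t\in\mathbb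 N}$ be positive step sizes, and define the online gradient descent iterates by $f_1=0$ and $f_{t+1}=f_t-\eta_t\phi'(y_t,f_t(x_t))K_{x_t}$ for $t\in\mathbb N$ (so $f_t$ depends only on $z_1,\dots,z_{t-1}$). Assumption 1: for every $y\in\mathcal Y$, $\phi(y,\cdot)$ is convex and differentiable, and there are constants $\alpha\in(0,1]$, $L>0$ with $|\phi'(y,s)-\phi'(y,\tilde s)|\le L|s-\tilde s|^{\alpha}$ for all $s,\tilde s\in\mathbb R$, $y\in\mathcal Y$. *)

theory Defs
  imports "HOL-Probability.Probability"
begin

text \<open>The RKHS H_K is represented through a feature map Phi into a real Hilbert space 'h
  with K x x' = inner (Phi x) (Phi x'); the element h of 'h represents the function
  x \<mapsto> inner h (Phi x), so K_x corresponds to Phi x.\<close>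

definition rkhs_fun :: "('a \<Rightarrow> 'h::real_inner) \<Rightarrow> 'h \<Rightarrow> 'a \<Rightarrow> real" where
  "rkhs_fun Phi h = (\<lambda>x. inner h (Phi x))"

definition gen_err :: "('a \<times> real) measure \<Rightarrow> (real \<Rightarrow> real \<Rightarrow> real) \<Rightarrow> ('a \<Rightarrow> real) \<Rightarrow> real" where
  "gen_err rho phi f = (\<integral>z. phi (snd z) (f (fst z)) \<partial>rho)"

text \<open>Online gradient descent iterates, 1-based as in the paper:
  ogd .. (Suc 0) = f_1 = 0 and ogd .. (Suc t) = f_{t+1} = f_t - eta_t phi'(y_t, f_t(x_t)) K_{x_t}
  for t >= 1, where z t = (x_t, y_t). The value at index 0 is an unused dummy (0).\<close>
primrec ogd :: "('a \<Rightarrow> 'h::real_inner) \<Rightarrow> (real \<Rightarrow> real \<Rightarrow> real) \<Rightarrow> (nat \<Rightarrow> real)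
    \<Rightarrow> (nat \<Rightarrow> 'a \<times> real) \<Rightarrow> nat \<Rightarrow> 'h" where
  "ogd Phi dphi eta z 0 = 0"
| "ogd Phi dphi eta z (Suc t) =
     (if t = 0 then 0
      else ogd Phi dphi eta z t
           - (eta t * dphi (snd (z t)) (inner (ogd Phi dphi eta z t) (Phi (fst (z t))))) *\<^sub>R Phi (fst (z t)))"

end

theory Submission
  imports Defs
begin

(*
  Write V t = norm (f_t - fH)^2. Convexity of the loss and the self-bounding property
  (phi')^2 <= 1 + c * phi of a nonnegative loss with alpha-Hoelder derivative give
    V (t+1) <= V t - beta_t * (phi(y_t, f_t(x_t)) - phi(y_t, fH(x_t))) + M * eta_t^2
  with beta_t >= eta_t for large t. Since z_t is independent of the past, the loss gap has
  conditional mean E(f_t) - E(fH) >= 0, so V t + M * (sum_{j>=t} eta_j^2) is a nonnegative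
  supermartingale with drift -eta_t * (E(f_t) - E(fH)). Hence, almost surely, it stays bounded
  (Ville's maximal inequality) and sum_t eta_t * (E(f_t) - E(fH)) < oo. On such a path the iterates
  stay in a ball on which E is Lipschitz, so E(f_{t+1}) - E(f_t) = O(eta_t); together with
  sum eta_t = oo and eta_t -> 0 this forces E(f_t) -> E(fH).
*)

section \<open>Real analysis\<close>

text \<open>An excursion of \<open>a\<close> that starts below \<open>eps\<close> stays below \<open>2 eps\<close>: its first step adds at
  most \<open>eps/2\<close>, and the steps spent above \<open>eps\<close> are paid for by the tail of \<open>\<Sum> e t * a t\<close>.\<close>

lemma excursion_bound:
  fixes a e :: "nat \<Rightarrow> real"
  assumes e_nonneg: "\<And>t. 0 \<le> e t" and C: "0 < C" and eps: "0 < eps"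
    and increment: "\<And>t. a (Suc t) - a t \<le> C * e t"
    and small_steps: "\<And>t. s \<le> t \<Longrightarrow> C * e t \<le> eps / 2"
    and small_tail: "\<And>m n. s \<le> m \<Longrightarrow> (\<Sum>i\<in>{m..<n}. e i * a i) \<le> eps\<^sup>2 / (2 * C)"
    and start: "a s < eps" and t: "s \<le> t"
  shows "a t \<le> 2 * eps"
proof (rule ccontr)
  assume "\<not> a t \<le> 2 * eps"
  then have at: "a t > 2 * eps" by simp
  define A where "A = {q\<in>{s..t}. a q < eps}"
  have "finite A" "s \<in> A" using start t by (auto simp: A_def)
  define r0 where "r0 = Max A"
  have "r0 \<in> A" using \<open>finite A\<close> \<open>s \<in> A\<close> unfolding r0_def by (intro Max_in) auto
  then have r0: "s \<le> r0" "r0 \<le> t" "a r0 < eps" by (auto simp: A_def)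
  have "r0 \<noteq> t" using r0 at eps by auto
  with r0 have r0t: "r0 < t" by simp
  have big: "eps \<le> a q" if q: "r0 < q" "q \<le> t" for q
  proof (rule ccontr)
    assume "\<not> eps \<le> a q"
    then have "q \<in> A" using q r0 by (auto simp: A_def)
    then show False using Max_ge[OF \<open>finite A\<close> \<open>q \<in> A\<close>] q by (simp add: r0_def)
  qed
  have "(\<Sum>q\<in>{Suc r0..<t}. C * e q) \<le> (\<Sum>q\<in>{Suc r0..<t}. (C / eps) * (e q * a q))"
  proof (intro sum_mono)
    fix q assume "q \<in> {Suc r0..<t}"
    then have "e q * eps \<le> e q * a q" using big e_nonneg[of q] by (intro mult_left_mono) auto
    then show "C * e q \<le> (C / eps) * (e q * a q)" using eps C by (simp add: field_simps)
  qed
  also have "\<dots> = (C / eps) * (\<Sum>q\<in>{Suc r0..<t}. e q * a q)" by (simp add: sum_distrib_left)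
  also have "\<dots> \<le> (C / eps) * (eps\<^sup>2 / (2 * C))"
    using small_tail[of "Suc r0" t] r0 C eps by (intro mult_left_mono) auto
  also have "\<dots> = eps / 2" using C eps by (simp add: field_simps power2_eq_square)
  finally have tail: "(\<Sum>q\<in>{Suc r0..<t}. C * e q) \<le> eps / 2" .
  have "a t - a r0 = (\<Sum>q\<in>{r0..<t}. a (Suc q) - a q)" using sum_Suc_diff'[of r0 t a] r0t by simp
  also have "\<dots> \<le> (\<Sum>q\<in>{r0..<t}. C * e q)" by (intro sum_mono increment)
  also have "\<dots> = C * e r0 + (\<Sum>q\<in>{Suc r0..<t}. C * e q)"
    using r0t by (subst sum.atLeast_Suc_lessThan) auto
  finally show False using small_steps[OF r0(1)] tail at r0 by simp
qed

lemma tendsto_zero_if_weighted_summable: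
  fixes a e :: "nat \<Rightarrow> real" and C :: real
  assumes a_nonneg: "\<And>t. 0 \<le> a t" and e_nonneg: "\<And>t. 0 \<le> e t"
    and weighted: "summable (\<lambda>t. e t * a t)" and not_summable: "\<not> summable e"
    and e_lim: "e \<longlonglongrightarrow> 0" and C: "0 < C"
    and increment: "\<And>t. a (Suc t) - a t \<le> C * e t"
  shows "a \<longlonglongrightarrow> 0"
proof (rule LIMSEQ_I)
  fix r :: real assume "0 < r"
  define eps where "eps = r / 3"
  have eps: "0 < eps" using \<open>0 < r\<close> by (simp add: eps_def)
  have "\<forall>\<^sub>F t in sequentially. e t < eps / (2 * C)"
    using eps C by (intro order_tendstoD(2)[OF e_lim]) auto
  then obtain N1 where N1': "\<forall>t\<ge>N1. e t < eps / (2 * C)"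
    unfolding eventually_sequentially by blast
  have N1: "C * e t \<le> eps / 2" if "N1 \<le> t" for t
  proof -
    have "e t * (2 * C) < eps" using N1' that C by (simp add: pos_less_divide_eq)
    then show ?thesis by (simp add: field_simps mult.commute)
  qed
  have "0 < eps\<^sup>2 / (2 * C)" using eps C by simp
  with weighted[unfolded summable_Cauchy]
  obtain N2 where N2: "\<forall>m\<ge>N2. \<forall>n. norm (\<Sum>i\<in>{m..<n}. e i * a i) < eps\<^sup>2 / (2 * C)"
    by blast
  have "\<exists>s\<ge>max N1 N2. a s < eps"
  proof (rule ccontr)
    assume "\<not> ?thesis"
    then have ge: "\<And>t. t \<ge> max N1 N2 \<Longrightarrow> eps \<le> a t" by (auto simp: not_less)
    have "summable e"
    proof (rule summable_comparison_test'[of "\<lambda>t. e t * a t / eps" "max N1 N2"])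
      show "summable (\<lambda>t. e t * a t / eps)" using weighted by (rule summable_divide)
      fix n assume "max N1 N2 \<le> n"
      then have "e n * eps \<le> e n * a n" using ge e_nonneg[of n] by (intro mult_left_mono) auto
      then show "norm (e n) \<le> e n * a n / eps" using eps e_nonneg[of n] by (simp add: field_simps)
    qed
    then show False using not_summable by simp
  qed
  then obtain s where s: "s \<ge> max N1 N2" "a s < eps" by blast
  have "a t \<le> 2 * eps" if "s \<le> t" for t
  proof (rule excursion_bound[OF e_nonneg C eps increment _ _ s(2) that])
    show "C * e t' \<le> eps / 2" if "s \<le> t'" for t' using N1 s(1) that by simp
    show "(\<Sum>i\<in>{m..<n}. e i * a i) \<le> eps\<^sup>2 / (2 * C)" if "s \<le> m" for m n
    proof -
      have "norm (\<Sum>i\<in>{m..<n}. e i * a i) < eps\<^sup>2 / (2 * C)" using N2 s(1) that by simp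
      then show ?thesis by simp
    qed
  qed
  then show "\<exists>no. \<forall>n\<ge>no. norm (a n - 0) < r"
    using a_nonneg \<open>0 < r\<close> by (intro exI[of _ s]) (force simp: eps_def)
qed

locale nonneg_holder_smooth =
  fixes f f' :: "real \<Rightarrow> real" and alpha L :: real
  assumes deriv: "\<And>s. (f has_real_derivative f' s) (at s)"
    and holder: "\<And>s s'. \<bar>f' s - f' s'\<bar> \<le> L * \<bar>s - s'\<bar> powr alpha"
    and alpha: "0 < alpha" "alpha \<le> 1" and L_pos: "0 < L"
    and nonneg: "\<And>s. 0 \<le> f s"
begin

lemma taylor_upper: "f (s + u) \<le> f s + f' s * u + L * \<bar>u\<bar> powr (1 + alpha)"
proof -
  have key: "f' xi * u \<le> f' s * u + L * \<bar>u\<bar> powr (1 + alpha)" if xi: "\<bar>xi - s\<bar> \<le> \<bar>u\<bar>" for xi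
  proof -
    have "(f' xi - f' s) * u \<le> \<bar>f' xi - f' s\<bar> * \<bar>u\<bar>"
      by (metis abs_ge_self abs_mult)
    also have "\<dots> \<le> (L * \<bar>u\<bar> powr alpha) * \<bar>u\<bar>"
      using holder[of xi s] powr_mono2[OF _ _ xi, of alpha] L_pos alpha
      by (intro mult_right_mono) (auto intro: order.trans mult_left_mono)
    also have "\<dots> = L * \<bar>u\<bar> powr (1 + alpha)"
      by (cases "u = 0") (auto simp: powr_add)
    finally show ?thesis by (simp add: algebra_simps)
  qed
  consider "u = 0" | "u > 0" | "u < 0" by linarith
  then show ?thesis
  proof cases
    case 1 then show ?thesis by simp
  next
    case 2
    obtain xi where "s < xi" "xi < s + u" "f (s + u) - f s = (s + u - s) * f' xi"
      using MVT2[of s "s + u" f f'] 2 deriv by auto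
    with key[of xi] show ?thesis by (simp add: algebra_simps)
  next
    case 3
    obtain xi where "s + u < xi" "xi < s" "f s - f (s + u) = (s - (s + u)) * f' xi"
      using MVT2[of "s + u" s f f'] 3 deriv by auto
    with key[of xi] show ?thesis by (simp add: algebra_simps)
  qed
qed

text \<open>Self-bounding property: a nonnegative function cannot have a large slope at a point
  where it is small, since a step of length \<open>r\<close> against the slope, with
  \<open>r\<^sup>\<alpha> = \<bar>f' s\<bar> / (2 L)\<close>, would otherwise make it negative.\<close>

lemma deriv_sq_le: "(f' s)\<^sup>2 \<le> 1 + 2 * (2 * L) powr (1 / alpha) * f s"
proof (cases "\<bar>f' s\<bar> \<le> 1")
  case True
  then have "(f' s)\<^sup>2 \<le> 1" by (simp add: abs_square_le_1)
  then show ?thesis using L_pos nonneg[of s] by (smt (verit) mult_nonneg_nonneg powr_ge_zero)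
next
  case False
  let ?g = "\<bar>f' s\<bar>"
  define r where "r = (?g / (2 * L)) powr (1 / alpha)"
  have r_pos: "r > 0" using False L_pos by (simp add: r_def)
  have r_alpha: "r powr alpha = ?g / (2 * L)"
    unfolding r_def using alpha False L_pos by (simp add: powr_powr)
  have "0 \<le> f (s + - sgn (f' s) * r)" by (rule nonneg)
  also have "\<dots> \<le> f s + f' s * (- sgn (f' s) * r) + L * \<bar>- sgn (f' s) * r\<bar> powr (1 + alpha)"
    by (rule taylor_upper)
  also have "\<dots> = f s - ?g * r + L * r * r powr alpha"
    using False r_pos by (auto simp: sgn_if abs_mult powr_add)
  also have "\<dots> = f s - ?g * r / 2" using r_alpha L_pos by (simp add: field_simps)
  finally have step: "?g * r \<le> 2 * f s" by simp
  have r_eq: "r = ?g powr (1 / alpha) / (2 * L) powr (1 / alpha)"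
    unfolding r_def using False L_pos by (simp add: powr_divide)
  have "?g powr 1 \<le> ?g powr (1 / alpha)"
    using False alpha by (intro powr_mono) (auto simp: field_simps)
  have "(f' s)\<^sup>2 = ?g * ?g" by (simp add: power2_eq_square)
  also have "\<dots> \<le> ?g * ?g powr (1 / alpha)"
    using \<open>?g powr 1 \<le> ?g powr (1 / alpha)\<close> False by (intro mult_left_mono) auto
  also have "\<dots> = (2 * L) powr (1 / alpha) * (?g * r)"
    using L_pos by (simp add: r_eq)
  also have "\<dots> \<le> (2 * L) powr (1 / alpha) * (2 * f s)"
    using step by (intro mult_left_mono) auto
  finally show ?thesis by simp
qed

lemma deriv_zero_bound: "\<bar>f' 0\<bar> \<le> f 0 + L"
proof -
  have "0 \<le> f (0 + - sgn (f' 0))" by (rule nonneg)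
  also have "\<dots> \<le> f 0 + f' 0 * (- sgn (f' 0)) + L * \<bar>- sgn (f' 0)\<bar> powr (1 + alpha)"
    by (rule taylor_upper)
  also have "\<dots> \<le> f 0 - \<bar>f' 0\<bar> + L"
    using L_pos by (cases "f' 0 = 0") (auto simp: sgn_if abs_if)
  finally show ?thesis by simp
qed

lemma deriv_growth: "\<bar>f' s\<bar> \<le> f 0 + 2 * L + L * \<bar>s\<bar>"
proof -
  have "\<bar>s\<bar> powr alpha \<le> 1 + \<bar>s\<bar>"
  proof (cases "\<bar>s\<bar> \<le> 1")
    case True
    then show ?thesis using powr_le1[of alpha "\<bar>s\<bar>"] alpha by simp
  next
    case False
    then have "\<bar>s\<bar> powr alpha \<le> \<bar>s\<bar> powr 1" using alpha by (intro powr_mono) auto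
    then show ?thesis using False by simp
  qed
  then have "L * \<bar>s\<bar> powr alpha \<le> L * (1 + \<bar>s\<bar>)" using L_pos by simp
  then have "\<bar>f' s - f' 0\<bar> \<le> L * (1 + \<bar>s\<bar>)" using holder[of s 0] by simp
  then show ?thesis using deriv_zero_bound by (simp add: algebra_simps)
qed

lemma lipschitz_on_interval:
  assumes "\<bar>a\<bar> \<le> R" "\<bar>b\<bar> \<le> R"
  shows "\<bar>f a - f b\<bar> \<le> (f 0 + 2 * L + L * R) * \<bar>a - b\<bar>"
proof -
  have *: "\<bar>f v - f u\<bar> \<le> (f 0 + 2 * L + L * R) * \<bar>v - u\<bar>"
    if uv: "\<bar>u\<bar> \<le> R" "\<bar>v\<bar> \<le> R" "u < v" for u v
  proof -
    obtain xi where xi: "u < xi" "xi < v" "f v - f u = (v - u) * f' xi"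
      using MVT2[OF uv(3) deriv] by auto
    have "L * \<bar>xi\<bar> \<le> L * R" using xi uv L_pos by simp
    then have "\<bar>f' xi\<bar> \<le> f 0 + 2 * L + L * R" using deriv_growth[of xi] by linarith
    then show ?thesis using xi by (simp add: abs_mult mult.commute mult_right_mono)
  qed
  consider "a = b" | "a < b" | "b < a" by linarith
  then show ?thesis
  proof cases
    case 2 then show ?thesis using *[OF assms] by (simp add: abs_minus_commute)
  next
    case 3 then show ?thesis using *[OF assms(2,1)] by (simp add: abs_minus_commute)
  qed simp
qed

end

lemma tendsto_zero_if_summable_powr:
  fixes e :: "nat \<Rightarrow> real"
  assumes e_nonneg: "\<And>t. 0 \<le> e t" and p: "0 < p" and summable: "summable (\<lambda>t. e t powr p)"
  shows "e \<longlonglongrightarrow> 0"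
proof -
  have "(\<lambda>t. (e t powr p) powr (1 / p)) \<longlonglongrightarrow> 0"
    by (rule tendsto_zero_powrI[OF summable_LIMSEQ_zero[OF summable] tendsto_const]) (use p in auto)
  moreover have "(e t powr p) powr (1 / p) = e t" for t
    using e_nonneg[of t] p by (simp add: powr_powr)
  ultimately show ?thesis by simp
qed

lemma summable_power2_if_summable_powr:
  fixes e :: "nat \<Rightarrow> real"
  assumes e_nonneg: "\<And>t. 0 \<le> e t" and p: "0 < p" "p \<le> 2" and summable: "summable (\<lambda>t. e t powr p)"
  shows "summable (\<lambda>t. (e t)\<^sup>2)"
proof (rule summable_comparison_test[OF _ summable])
  obtain N where N: "\<forall>t\<ge>N. norm (e t - 0) < 1"
    using LIMSEQ_D[OF tendsto_zero_if_summable_powr[OF e_nonneg p(1) summable], of 1] by auto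
  have "norm ((e t)\<^sup>2) \<le> e t powr p" if "t \<ge> N" for t
  proof -
    have "e t \<le> 1" using N that by auto
    then show ?thesis using powr_mono'[OF p(2) e_nonneg[of t]] e_nonneg[of t] by simp
  qed
  then show "\<exists>N. \<forall>t\<ge>N. norm ((e t)\<^sup>2) \<le> e t powr p" by blast
qed

lemma continuous_on_feature_map:
  fixes Phi :: "'a::topological_space \<Rightarrow> 'h::real_inner"
  assumes kernel_cont: "continuous_on (X \<times> X) (\<lambda>(x, x'). inner (Phi x) (Phi x'))"
  shows "continuous_on X Phi"
proof (unfold continuous_on_def, intro ballI)
  fix x0 assume x0: "x0 \<in> X"
  let ?k = "\<lambda>x x'. inner (Phi x) (Phi x')"
  have "continuous_on X (\<lambda>x. (x, x))" "continuous_on X (\<lambda>x. (x, x0))"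
    by (intro continuous_intros)+
  then have "continuous_on X (\<lambda>x. ?k x x)" "continuous_on X (\<lambda>x. ?k x x0)"
    using continuous_on_compose2[OF kernel_cont] x0 by fastforce+
  then have "((\<lambda>x. ?k x x) \<longlongrightarrow> ?k x0 x0) (at x0 within X)"
    "((\<lambda>x. ?k x x0) \<longlongrightarrow> ?k x0 x0) (at x0 within X)"
    using x0 unfolding continuous_on_def by auto
  then have "((\<lambda>x. ?k x x - 2 * ?k x x0 + ?k x0 x0) \<longlongrightarrow> ?k x0 x0 - 2 * ?k x0 x0 + ?k x0 x0)
      (at x0 within X)"
    by (intro tendsto_add tendsto_diff tendsto_mult tendsto_const)
  moreover have "(norm (Phi x - Phi x0))\<^sup>2 = ?k x x - 2 * ?k x x0 + ?k x0 x0" for x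
    by (simp add: power2_norm_eq_inner inner_diff_left inner_diff_right inner_commute)
  ultimately have "((\<lambda>x. sqrt ((norm (Phi x - Phi x0))\<^sup>2)) \<longlongrightarrow> sqrt 0) (at x0 within X)"
    by (intro tendsto_intros) simp
  then show "(Phi \<longlongrightarrow> Phi x0) (at x0 within X)"
    by (simp add: Lim_null[of Phi] tendsto_norm_zero_iff)
qed

lemma DERIV_difference_quotient_sequence:
  assumes "DERIV f x :> D"
  shows "(\<lambda>n. (f (x + 1 / Suc n) - f x) / (1 / Suc n)) \<longlonglongrightarrow> D"
proof -
  have "filterlim (\<lambda>n. 1 / real (Suc n)) (at 0) sequentially"
  proof (rule tendsto_imp_filterlim_at_right[THEN filterlim_mono])
    show "(\<lambda>n. 1 / real (Suc n)) \<longlonglongrightarrow> 0" by (rule LIMSEQ_Suc[OF lim_const_over_n])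
  qed (auto simp: at_le)
  from filterlim_compose[OF DERIV_D[OF assms] this] show ?thesis by simp
qed

section \<open>Measure theory and probability\<close>

lemma borel_measurable_continuous_on_compose:
  fixes g :: "'b::topological_space \<Rightarrow> 'c::topological_space"
  assumes g: "continuous_on A g" and a: "a \<in> borel_measurable M" and aA: "\<And>m. m \<in> space M \<Longrightarrow> a m \<in> A"
  shows "(\<lambda>m. g (a m)) \<in> borel_measurable M"
proof -
  have "a \<in> measurable M (restrict_space borel A)" using a aA by (intro measurable_restrict_space2) auto
  from measurable_compose[OF this borel_measurable_continuous_on_restrict[OF g]] show ?thesis by simp
qed

lemma AE_summable_if_summable_integrals:
  fixes f :: "nat \<Rightarrow> 'a \<Rightarrow> real"
  assumes integrable: "\<And>i. integrable M (f i)" and nonneg: "\<And>i x. x \<in> space M \<Longrightarrow> 0 \<le> f i x"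
    and summable: "summable (\<lambda>i. \<integral>x. f i x \<partial>M)"
  shows "AE x in M. summable (\<lambda>i. f i x)"
proof -
  have meas: "\<And>i. (\<lambda>x. ennreal (f i x)) \<in> borel_measurable M" using integrable by auto
  have "(\<integral>\<^sup>+x. (\<Sum>i. ennreal (f i x)) \<partial>M) = (\<Sum>i. \<integral>\<^sup>+x. ennreal (f i x) \<partial>M)"
    by (rule nn_integral_suminf[OF meas])
  also have "\<dots> = (\<Sum>i. ennreal (\<integral>x. f i x \<partial>M))"
    using integrable nonneg by (intro suminf_cong nn_integral_eq_integral AE_I2) auto
  also have "\<dots> = ennreal (\<Sum>i. \<integral>x. f i x \<partial>M)"
    using summable nonneg by (intro suminf_ennreal2 integral_nonneg_AE AE_I2) auto
  finally have "AE x in M. (\<Sum>i. ennreal (f i x)) \<noteq> \<infinity>"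
    using meas by (intro nn_integral_PInf_AE) auto
  then show ?thesis
    by (rule AE_mp) (use nonneg in \<open>auto intro!: AE_I2 summable_suminf_not_top\<close>)
qed

lemma (in prob_space) integral_indep_var_pair:
  fixes S T :: "'b measure" and h :: "'b \<times> 'b \<Rightarrow> real"
  assumes indep: "indep_var S X T Y"
    and h: "h \<in> borel_measurable (S \<Otimes>\<^sub>M T)" and bounded: "\<And>p. p \<in> space (S \<Otimes>\<^sub>M T) \<Longrightarrow> \<bar>h p\<bar> \<le> B"
  shows "(\<integral>\<omega>. h (X \<omega>, Y \<omega>) \<partial>M) = (\<integral>\<omega>. (\<integral>y. h (X \<omega>, y) \<partial>distr M T Y) \<partial>M)"
proof -
  have X: "random_variable S X" and Y: "random_variable T Y"
    using indep by (blast dest: indep_var_rv1 indep_var_rv2)+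
  let ?D = "distr M S X" and ?E = "distr M T Y"
  interpret D: prob_space ?D by (rule prob_space_distr[OF X])
  interpret E: prob_space ?E by (rule prob_space_distr[OF Y])
  interpret DE: pair_prob_space ?D ?E ..
  have joint: "?D \<Otimes>\<^sub>M ?E = distr M (S \<Otimes>\<^sub>M T) (\<lambda>\<omega>. (X \<omega>, Y \<omega>))"
    using indep unfolding indep_var_distribution_eq by auto
  have sets_DE: "sets (?D \<Otimes>\<^sub>M ?E) = sets (S \<Otimes>\<^sub>M T)" by (intro sets_pair_measure_cong) auto
  have "integrable (?D \<Otimes>\<^sub>M ?E) h"
    using bounded h sets_eq_imp_space_eq[OF sets_DE] measurable_cong_sets[OF sets_DE refl]
    by (intro DE.P.integrable_const_bound[where B=B] AE_I2) auto
  have "(\<integral>\<omega>. h (X \<omega>, Y \<omega>) \<partial>M) = (\<integral>p. h p \<partial>(?D \<Otimes>\<^sub>M ?E))"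
    unfolding joint using X Y h by (subst integral_distr) auto
  also have "\<dots> = (\<integral>x. (\<integral>y. h (x, y) \<partial>?E) \<partial>?D)"
    using DE.integral_fst'[OF \<open>integrable (?D \<Otimes>\<^sub>M ?E) h\<close>] by simp
  also have "\<dots> = (\<integral>\<omega>. (\<integral>y. h (X \<omega>, y) \<partial>?E) \<partial>M)"
    using h by (intro integral_distr[OF X] E.borel_measurable_lebesgue_integral) auto
  finally show ?thesis .
qed

lemma integrable_mult_unit_bounded:
  fixes f g :: "'a \<Rightarrow> real"
  assumes "integrable M f" "g \<in> borel_measurable M" "\<And>x. x \<in> space M \<Longrightarrow> \<bar>g x\<bar> \<le> 1"
  shows "integrable M (\<lambda>x. g x * f x)"
proof (rule Bochner_Integration.integrable_bound[OF assms(1)])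
  show "(\<lambda>x. g x * f x) \<in> borel_measurable M" using assms(1,2) by auto
  show "AE x in M. norm (g x * f x) \<le> norm (f x)"
    using assms(3) by (intro AE_I2) (simp add: abs_mult mult_left_le_one_le)
qed

text \<open>The process \<open>U\<close> observed from time \<open>T\<close> on and frozen from the first time it
  reaches the level \<open>lam\<close>.\<close>

primrec stopped_at_level :: "real \<Rightarrow> (nat \<Rightarrow> 'w \<Rightarrow> real) \<Rightarrow> nat \<Rightarrow> nat \<Rightarrow> 'w \<Rightarrow> real" where
  "stopped_at_level lam U T 0 \<omega> = U T \<omega>"
| "stopped_at_level lam U T (Suc k) \<omega> = stopped_at_level lam U T k \<omega>
     + of_bool (\<forall>s\<in>{T..T + k}. U s \<omega> < lam) * (U (Suc (T + k)) \<omega> - U (T + k) \<omega>)"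

lemma stopped_at_level_cases:
  "((\<forall>s\<in>{T..T + k}. U s \<omega> < lam) \<longrightarrow> stopped_at_level lam U T k \<omega> = U (T + k) \<omega>)
   \<and> ((\<exists>s\<in>{T..T + k}. lam \<le> U s \<omega>) \<longrightarrow> lam \<le> stopped_at_level lam U T k \<omega>)"
proof (induction k)
  case (Suc k)
  have split: "{T..T + Suc k} = insert (Suc (T + k)) {T..T + k}" by auto
  show ?case
  proof (cases "\<forall>s\<in>{T..T + k}. U s \<omega> < lam")
    case True
    then show ?thesis using Suc unfolding split by (auto simp: not_less)
  next
    case False
    then show ?thesis using Suc unfolding split by (auto simp: not_less)
  qed
qed auto

lemma level_le_stopped_at_level:
  assumes "0 \<le> U (T + k) \<omega>"
  shows "lam * of_bool (\<exists>s\<in>{T..T + k}. lam \<le> U s \<omega>) \<le> stopped_at_level lam U T k \<omega>"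
  using stopped_at_level_cases[of T k U \<omega> lam] assms by (cases "\<exists>s\<in>{T..T + k}. lam \<le> U s \<omega>") auto

lemma stopped_at_level_Suc:
  "stopped_at_level lam U T (Suc k) = (\<lambda>\<omega>. stopped_at_level lam U T k \<omega>
     + of_bool (\<forall>s\<in>{T..T + k}. U s \<omega> < lam) * U (Suc (T + k)) \<omega>
     - of_bool (\<forall>s\<in>{T..T + k}. U s \<omega> < lam) * U (T + k) \<omega>)"
  by (simp add: fun_eq_iff right_diff_distrib)

lemma (in prob_space) integrable_stopped_at_level:
  fixes U :: "nat \<Rightarrow> 'a \<Rightarrow> real"
  assumes U_int: "\<And>t. integrable M (U t)"
  shows "integrable M (\<lambda>\<omega>. of_bool (\<forall>s\<in>{T..T + k}. U s \<omega> < lam) * U t \<omega>)"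
    and "integrable M (stopped_at_level lam U T k)"
proof -
  have "U t \<in> borel_measurable M" for t using U_int by auto
  then have "(\<lambda>\<omega>. of_bool (\<forall>s\<in>{T..T + k}. U s \<omega> < lam) :: real) \<in> borel_measurable M" for k
    by measurable
  then show Q_int: "integrable M (\<lambda>\<omega>. of_bool (\<forall>s\<in>{T..T + k}. U s \<omega> < lam) * U t \<omega>)" for k t
    by (rule integrable_mult_unit_bounded[OF U_int]) simp
  show "integrable M (stopped_at_level lam U T k)"
    by (induction k) (simp_all add: U_int Q_int stopped_at_level_Suc)
qed

text \<open>Ville's maximal inequality for a nonnegative process whose stopped versions have
  nonincreasing expectations, i.e.\ a nonnegative supermartingale tested only against the
  events \<open>{\<forall>s\<in>{T..T + k}. U s < lam}\<close>.\<close>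

lemma (in prob_space) maximal_inequality_stopped:
  fixes U :: "nat \<Rightarrow> 'a \<Rightarrow> real"
  assumes U_int: "\<And>t. integrable M (U t)" and U_nonneg: "\<And>t \<omega>. \<omega> \<in> space M \<Longrightarrow> 0 \<le> U t \<omega>"
    and lam: "0 < lam"
    and stopped_decr: "\<And>k. (\<integral>\<omega>. of_bool (\<forall>s\<in>{T..T + k}. U s \<omega> < lam) * U (Suc (T + k)) \<omega> \<partial>M)
                        \<le> (\<integral>\<omega>. of_bool (\<forall>s\<in>{T..T + k}. U s \<omega> < lam) * U (T + k) \<omega> \<partial>M)"
  shows "measure M {\<omega>\<in>space M. \<exists>t\<in>{T..T + k}. lam \<le> U t \<omega>} \<le> (\<integral>\<omega>. U T \<omega> \<partial>M) / lam"
proof -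
  note ints = integrable_stopped_at_level[OF U_int]
  have U_meas: "\<And>t. U t \<in> borel_measurable M" using U_int by auto
  have V_decr: "(\<integral>\<omega>. stopped_at_level lam U T k \<omega> \<partial>M) \<le> (\<integral>\<omega>. U T \<omega> \<partial>M)" for k
  proof (induction k)
    case (Suc k)
    have "(\<integral>\<omega>. stopped_at_level lam U T (Suc k) \<omega> \<partial>M)
      = (\<integral>\<omega>. stopped_at_level lam U T k \<omega> \<partial>M)
        + (\<integral>\<omega>. of_bool (\<forall>s\<in>{T..T + k}. U s \<omega> < lam) * U (Suc (T + k)) \<omega> \<partial>M)
        - (\<integral>\<omega>. of_bool (\<forall>s\<in>{T..T + k}. U s \<omega> < lam) * U (T + k) \<omega> \<partial>M)"
      unfolding stopped_at_level_Suc
      using Bochner_Integration.integral_diff[OF Bochner_Integration.integrable_add[OF ints(2) ints(1)] ints(1)]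
        Bochner_Integration.integral_add[OF ints(2) ints(1)] by simp
    then show ?case using Suc stopped_decr[of k] by linarith
  qed simp
  let ?H = "{\<omega>\<in>space M. \<exists>t\<in>{T..T + k}. lam \<le> U t \<omega>}"
  have H_sets: "?H \<in> sets M" using U_meas by measurable
  have "lam * measure M ?H = (\<integral>\<omega>. lam * indicator ?H \<omega> \<partial>M)"
    using H_sets by simp
  also have "\<dots> = (\<integral>\<omega>. lam * of_bool (\<exists>t\<in>{T..T + k}. lam \<le> U t \<omega>) \<partial>M)"
    by (intro Bochner_Integration.integral_cong) (auto simp: indicator_def)
  also have "\<dots> \<le> (\<integral>\<omega>. stopped_at_level lam U T k \<omega> \<partial>M)"
  proof (rule integral_mono[OF _ ints(2)])
    have "(\<lambda>\<omega>. lam * of_bool (\<exists>t\<in>{T..T + k}. lam \<le> U t \<omega>)) \<in> borel_measurable M"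
      using U_meas by measurable
    then show "integrable M (\<lambda>\<omega>. lam * of_bool (\<exists>t\<in>{T..T + k}. lam \<le> U t \<omega>))"
      using lam by (intro integrable_const_bound[where B=lam] AE_I2) auto
  qed (simp add: level_le_stopped_at_level U_nonneg)
  also have "\<dots> \<le> (\<integral>\<omega>. U T \<omega> \<partial>M)" by (rule V_decr)
  finally show ?thesis using lam by (simp add: pos_le_divide_eq mult.commute)
qed

lemma (in prob_space) measure_reaches_level_le:
  fixes U :: "nat \<Rightarrow> 'a \<Rightarrow> real"
  assumes U_int: "\<And>t. integrable M (U t)" and U_nonneg: "\<And>t \<omega>. \<omega> \<in> space M \<Longrightarrow> 0 \<le> U t \<omega>"
    and lam: "0 < lam"
    and stopped_decr: "\<And>k. (\<integral>\<omega>. of_bool (\<forall>s\<in>{T..T + k}. U s \<omega> < lam) * U (Suc (T + k)) \<omega> \<partial>M)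
                        \<le> (\<integral>\<omega>. of_bool (\<forall>s\<in>{T..T + k}. U s \<omega> < lam) * U (T + k) \<omega> \<partial>M)"
  shows "measure M {\<omega>\<in>space M. \<exists>t\<ge>T. lam \<le> U t \<omega>} \<le> (\<integral>\<omega>. U T \<omega> \<partial>M) / lam"
proof (rule LIMSEQ_le_const2)
  define Hit where "Hit k = {\<omega>\<in>space M. \<exists>t\<in>{T..T + k}. lam \<le> U t \<omega>}" for k
  have U_meas: "\<And>t. U t \<in> borel_measurable M" using U_int by auto
  have "range Hit \<subseteq> sets M" unfolding Hit_def using U_meas by auto
  moreover have "incseq Hit" by (auto simp: incseq_def Hit_def)
  moreover have "(\<Union>k. Hit k) = {\<omega>\<in>space M. \<exists>t\<ge>T. lam \<le> U t \<omega>}"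
  proof (intro equalityI subsetI)
    fix \<omega> assume "\<omega> \<in> {\<omega>\<in>space M. \<exists>t\<ge>T. lam \<le> U t \<omega>}"
    then obtain t where "\<omega> \<in> space M" "T \<le> t" "lam \<le> U t \<omega>" by auto
    then have "\<omega> \<in> Hit (t - T)" by (auto simp: Hit_def intro!: bexI[of _ t])
    then show "\<omega> \<in> (\<Union>k. Hit k)" by blast
  qed (auto simp: Hit_def)
  ultimately show "(\<lambda>k. measure M (Hit k)) \<longlonglongrightarrow> measure M {\<omega>\<in>space M. \<exists>t\<ge>T. lam \<le> U t \<omega>}"
    by (metis finite_Lim_measure_incseq)
  show "\<exists>N. \<forall>k\<ge>N. measure M (Hit k) \<le> (\<integral>\<omega>. U T \<omega> \<partial>M) / lam"
    unfolding Hit_def using maximal_inequality_stopped[OF U_int U_nonneg lam stopped_decr] by blast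
qed

lemma (in prob_space) AE_bounded_if_stopped_decreasing:
  fixes U :: "nat \<Rightarrow> 'a \<Rightarrow> real"
  assumes U_int: "\<And>t. integrable M (U t)" and U_nonneg: "\<And>t \<omega>. \<omega> \<in> space M \<Longrightarrow> 0 \<le> U t \<omega>"
    and stopped_decr: "\<And>lam k. 0 < lam \<Longrightarrow>
          (\<integral>\<omega>. of_bool (\<forall>s\<in>{T..T + k}. U s \<omega> < lam) * U (Suc (T + k)) \<omega> \<partial>M)
        \<le> (\<integral>\<omega>. of_bool (\<forall>s\<in>{T..T + k}. U s \<omega> < lam) * U (T + k) \<omega> \<partial>M)"
  shows "AE \<omega> in M. \<exists>B. \<forall>t\<ge>T. U t \<omega> \<le> B"
proof -
  define Reach where "Reach m = {\<omega>\<in>space M. \<exists>t\<ge>T. real (Suc m) \<le> U t \<omega>}" for m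
  define N where "N = (\<Inter>m. Reach m)"
  have U_meas: "\<And>t. U t \<in> borel_measurable M" using U_int by auto
  have Reach_sets: "Reach m \<in> sets M" for m unfolding Reach_def using U_meas by measurable
  then have N_sets: "N \<in> sets M" unfolding N_def by blast
  have "measure M N \<le> (\<integral>\<omega>. U T \<omega> \<partial>M) / real (Suc m)" for m
  proof -
    have "measure M N \<le> measure M (Reach m)"
      using N_sets Reach_sets unfolding N_def by (intro finite_measure_mono) auto
    also have "\<dots> \<le> (\<integral>\<omega>. U T \<omega> \<partial>M) / real (Suc m)"
      unfolding Reach_def by (rule measure_reaches_level_le[OF U_int U_nonneg]) (auto intro: stopped_decr)
    finally show ?thesis .
  qed
  moreover have "(\<lambda>m. (\<integral>\<omega>. U T \<omega> \<partial>M) / real (Suc m)) \<longlonglongrightarrow> 0"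
    by (rule LIMSEQ_Suc[OF lim_const_over_n])
  ultimately have "measure M N \<le> 0" by (intro LIMSEQ_le_const) auto
  then have "N \<in> null_sets M"
    using N_sets measure_nonneg[of M N] by (simp add: emeasure_eq_measure null_sets_def)
  then show ?thesis
  proof (rule AE_I')
    show "{\<omega>\<in>space M. \<not> (\<exists>B. \<forall>t\<ge>T. U t \<omega> \<le> B)} \<subseteq> N"
      by (auto simp: N_def Reach_def not_le intro: less_imp_le)
  qed
qed

section \<open>The setting: losses and iterates\<close>

locale ogd_setting =
  fixes X :: "'a::euclidean_space set" and Y :: "real set"
    and rho :: "('a \<times> real) measure"
    and K :: "'a \<Rightarrow> 'a \<Rightarrow> real" and Phi :: "'a \<Rightarrow> 'h::{real_inner, complete_space}"
    and phi dphi :: "real \<Rightarrow> real \<Rightarrow> real"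
    and alpha L :: real
    and fH :: 'h
    and P :: "'w measure" and Z :: "nat \<Rightarrow> 'w \<Rightarrow> 'a \<times> real"
    and eta :: "nat \<Rightarrow> real"
  assumes rho_space: "space rho = X \<times> Y"
    and rho_sets: "sets rho = sets (restrict_space borel (X \<times> Y))"
    and rho_prob: "prob_space rho"
    and K_feature: "\<forall>x\<in>X. \<forall>x'\<in>X. K x x' = inner (Phi x) (Phi x')"
    and K_cont: "continuous_on (X \<times> X) (\<lambda>(x, x'). K x x')"
    and kappa_fin: "bdd_above ((\<lambda>x. sqrt (K x x)) ` X)"
    and phi_nonneg: "\<forall>y\<in>Y. \<forall>s. 0 \<le> phi y s"
    and phi_meas: "(\<lambda>(y, s). phi y s) \<in> borel_measurable (restrict_space borel (Y \<times> UNIV))"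
    and phi_deriv: "\<forall>y\<in>Y. \<forall>s. (phi y has_real_derivative dphi y s) (at s)"
    and phi_convex: "\<forall>y\<in>Y. convex_on UNIV (phi y)"
    and alpha: "0 < alpha" "alpha \<le> 1" and L_pos: "0 < L"
    and holder: "\<forall>y\<in>Y. \<forall>s s'. \<bar>dphi y s - dphi y s'\<bar> \<le> L * \<bar>s - s'\<bar> powr alpha"
    and fH_min: "\<forall>h. gen_err rho phi (rkhs_fun Phi fH) \<le> gen_err rho phi (rkhs_fun Phi h)"
    and phi0_bdd: "bdd_above ((\<lambda>y. phi y 0) ` Y)"
    and phifH_bdd: "bdd_above ((\<lambda>(x, y). phi y (rkhs_fun Phi fH x)) ` (X \<times> Y))"
    and P_prob: "prob_space P"
    and Z_indep: "prob_space.indep_vars P (\<lambda>_. rho) Z {1..}"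
    and Z_distr: "\<forall>t\<ge>1. distr P rho (Z t) = rho"
    and eta_pos: "\<forall>t\<ge>1. 0 < eta t"
    and eta_div: "\<not> summable (\<lambda>t. eta (t + 1))"
    and eta_sum: "summable (\<lambda>t. eta (t + 1) powr (1 + alpha))"
begin

lemma phi_holder_smooth: "y \<in> Y \<Longrightarrow> nonneg_holder_smooth (phi y) (dphi y) alpha L"
  using phi_deriv phi_nonneg holder alpha L_pos by unfold_locales auto

definition kappa :: real where "kappa = max 0 (SUP x\<in>X. sqrt (K x x))"

lemma kappa_nonneg: "0 \<le> kappa"
  by (simp add: kappa_def)

lemma norm_Phi_le: "x \<in> X \<Longrightarrow> norm (Phi x) \<le> kappa"
  using cSUP_upper[OF _ kappa_fin] K_feature by (force simp: kappa_def norm_eq_sqrt_inner)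

lemma eval_bound: "x \<in> X \<Longrightarrow> \<bar>inner h (Phi x)\<bar> \<le> norm h * kappa"
  using Cauchy_Schwarz_ineq2[of h "Phi x"] norm_Phi_le[of x]
  by (meson mult_left_mono norm_ge_zero order.trans)

definition B0 :: real where "B0 = max 0 (SUP y\<in>Y. phi y 0)"

lemma phi_zero_le: "y \<in> Y \<Longrightarrow> phi y 0 \<le> B0"
  using cSUP_upper[OF _ phi0_bdd] by (force simp: B0_def)

definition BH :: real where "BH = max 0 (SUP xy\<in>X \<times> Y. (\<lambda>(x, y). phi y (rkhs_fun Phi fH x)) xy)"

lemma BH_nonneg: "0 \<le> BH"
  by (simp add: BH_def)

lemma phi_fH_le: "x \<in> X \<Longrightarrow> y \<in> Y \<Longrightarrow> phi y (inner fH (Phi x)) \<le> BH"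
  using cSUP_upper[OF _ phifH_bdd, of "(x, y)"] by (force simp: BH_def rkhs_fun_def)

text \<open>A Lipschitz constant of the losses \<open>phi y\<close> on the interval \<open>[-r, r]\<close>.\<close>

definition lip :: "real \<Rightarrow> real" where "lip r = B0 + 2 * L + L * r"

lemma lip_nonneg: "0 \<le> r \<Longrightarrow> 0 \<le> lip r"
  using L_pos phi_zero_le by (simp add: lip_def B0_def)

lemma lip_mono: "r \<le> r' \<Longrightarrow> lip r \<le> lip r'"
  using L_pos by (simp add: lip_def)

lemma dphi_bound: "y \<in> Y \<Longrightarrow> \<bar>dphi y s\<bar> \<le> lip \<bar>s\<bar>"
  using nonneg_holder_smooth.deriv_growth[OF phi_holder_smooth] phi_zero_le
  by (smt (verit) lip_def)

lemma phi_lipschitz: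
  "y \<in> Y \<Longrightarrow> \<bar>a\<bar> \<le> r \<Longrightarrow> \<bar>b\<bar> \<le> r \<Longrightarrow> \<bar>phi y a - phi y b\<bar> \<le> lip r * \<bar>a - b\<bar>"
  using nonneg_holder_smooth.lipschitz_on_interval[OF phi_holder_smooth, of y a r b] phi_zero_le[of y]
  by (smt (verit) lip_def mult_right_mono abs_ge_zero)

lemma phi_le: "y \<in> Y \<Longrightarrow> \<bar>s\<bar> \<le> r \<Longrightarrow> phi y s \<le> B0 + lip r * r"
  using phi_lipschitz[of y s r 0] phi_zero_le[of y] lip_nonneg[of r]
  by (smt (verit) mult_left_mono abs_ge_zero)


abbreviation ogd_iter :: "(nat \<Rightarrow> 'a \<times> real) \<Rightarrow> nat \<Rightarrow> 'h" where
  "ogd_iter w t \<equiv> ogd Phi dphi eta w t"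

lemma ogd_iter_Suc:
  "1 \<le> t \<Longrightarrow> ogd_iter w (Suc t) =
     ogd_iter w t - (eta t * dphi (snd (w t)) (inner (ogd_iter w t) (Phi (fst (w t))))) *\<^sub>R Phi (fst (w t))"
  by simp

lemma ogd_iter_cong: "(\<And>i. 1 \<le> i \<Longrightarrow> i < t \<Longrightarrow> w i = w' i) \<Longrightarrow> ogd_iter w t = ogd_iter w' t"
  by (induction t) (auto simp: less_Suc_eq)

lemma eta_nonneg: "1 \<le> t \<Longrightarrow> 0 \<le> eta t"
  using eta_pos by (simp add: less_imp_le)

lemma ogd_iter_step_norm:
  assumes t: "1 \<le> t" and w: "w t \<in> X \<times> Y"
  shows "norm (ogd_iter w (Suc t) - ogd_iter w t) \<le> eta t * kappa * lip (kappa * norm (ogd_iter w t))"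
proof -
  obtain x y where xy: "w t = (x, y)" "x \<in> X" "y \<in> Y" using w by auto
  let ?s = "inner (ogd_iter w t) (Phi x)"
  have "\<bar>dphi y ?s\<bar> \<le> lip (kappa * norm (ogd_iter w t))"
    using dphi_bound[OF xy(3), of ?s] lip_mono eval_bound[OF xy(2), of "ogd_iter w t"]
    by (smt (verit) mult.commute)
  then have "eta t * \<bar>dphi y ?s\<bar> * norm (Phi x) \<le> eta t * lip (kappa * norm (ogd_iter w t)) * kappa"
    using norm_Phi_le[OF xy(2)] eta_nonneg[OF t] lip_nonneg[of "kappa * norm (ogd_iter w t)"] kappa_nonneg
    by (intro mult_mono mult_left_mono) auto
  then show ?thesis
    using ogd_iter_Suc[OF t, of w] xy eta_nonneg[OF t] by (simp add: abs_mult ac_simps)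
qed

lemma ogd_iter_bounded: "\<exists>b. \<forall>w. (\<forall>i. 1 \<le> i \<longrightarrow> i < t \<longrightarrow> w i \<in> X \<times> Y) \<longrightarrow> norm (ogd_iter w t) \<le> b"
proof (induction t)
  case (Suc t)
  then obtain b where b: "\<And>w. (\<forall>i. 1 \<le> i \<longrightarrow> i < t \<longrightarrow> w i \<in> X \<times> Y) \<Longrightarrow> norm (ogd_iter w t) \<le> b"
    by blast
  show ?case
  proof (cases "t = 0")
    case False
    have "norm (ogd_iter w (Suc t)) \<le> b + eta t * kappa * lip (kappa * b)"
      if w: "\<forall>i. 1 \<le> i \<longrightarrow> i < Suc t \<longrightarrow> w i \<in> X \<times> Y" for w
    proof -
      have t: "1 \<le> t" using False by simp
      have bw: "norm (ogd_iter w t) \<le> b" using b w by simp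
      have mono: "eta t * kappa * lip (kappa * norm (ogd_iter w t)) \<le> eta t * kappa * lip (kappa * b)"
        using bw kappa_nonneg eta_nonneg[OF t] lip_mono[of "kappa * norm (ogd_iter w t)" "kappa * b"]
        by (intro mult_left_mono) (auto intro: mult_left_mono)
      have wt: "w t \<in> X \<times> Y" using w t by simp
      have "norm (ogd_iter w (Suc t) - ogd_iter w t) \<le> eta t * kappa * lip (kappa * b)"
        using ogd_iter_step_norm[of t w, OF t wt] mono by (rule order_trans)
      then show ?thesis
        using norm_triangle_sub[of "ogd_iter w (Suc t)" "ogd_iter w t"] bw by linarith
    qed
    then show ?thesis by blast
  qed (auto intro: exI[of _ 0])
qed (auto intro: exI[of _ 0])

definition self_bound_const :: real where "self_bound_const = 2 * (2 * L) powr (1 / alpha)"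

lemma self_bound_const_pos: "0 < self_bound_const"
  using L_pos by (simp add: self_bound_const_def)

definition noise_const :: real where "noise_const = kappa\<^sup>2 * (1 + self_bound_const * BH)"

lemma noise_const_nonneg: "0 \<le> noise_const"
  using self_bound_const_pos BH_nonneg by (simp add: noise_const_def)

definition descent_weight :: "nat \<Rightarrow> real" where
  "descent_weight t = 2 * eta t - kappa\<^sup>2 * self_bound_const * (eta t)\<^sup>2"

text \<open>The one-step recursion for the squared distance to \<open>fH\<close>: convexity turns the cross term
  into the loss gap, and the self-bounding property turns the squared gradient into the loss.\<close>

lemma ogd_iter_dist_step:
  assumes t: "1 \<le> t" and w: "w t = (x, y)" and x: "x \<in> X" and y: "y \<in> Y"
  shows "(norm (ogd_iter w (Suc t) - fH))\<^sup>2 \<le> (norm (ogd_iter w t - fH))\<^sup>2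
     - descent_weight t * (phi y (inner (ogd_iter w t) (Phi x)) - phi y (inner fH (Phi x)))
     + (eta t)\<^sup>2 * noise_const"
proof -
  let ?e = "eta t" and ?s = "inner (ogd_iter w t) (Phi x)" and ?h = "inner fH (Phi x)"
  let ?g = "dphi y ?s" and ?D = "phi y ?s - phi y ?h" and ?c = "self_bound_const"
  have step: "ogd_iter w (Suc t) - fH = (ogd_iter w t - fH) - (?e * ?g) *\<^sub>R Phi x"
    using ogd_iter_Suc[OF t, of w] w by simp
  have expand: "(norm (ogd_iter w (Suc t) - fH))\<^sup>2
      = (norm (ogd_iter w t - fH))\<^sup>2 - 2 * ?e * (?g * (?s - ?h)) + ?e\<^sup>2 * (?g\<^sup>2 * inner (Phi x) (Phi x))"
    unfolding step power2_norm_eq_inner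
    by (simp add: inner_diff_left inner_diff_right inner_commute power2_eq_square algebra_simps)
  have tangent: "?D \<le> ?g * (?s - ?h)"
    using convex_on_imp_above_tangent[of UNIV "phi y" ?s ?h ?g] phi_convex phi_deriv y
    by (simp add: algebra_simps)
  have "?g\<^sup>2 \<le> 1 + ?c * phi y ?s"
    using nonneg_holder_smooth.deriv_sq_le[OF phi_holder_smooth[OF y]] by (simp add: self_bound_const_def)
  also have "\<dots> \<le> 1 + ?c * ?D + ?c * BH"
    using phi_fH_le[OF x y] self_bound_const_pos by (simp add: algebra_simps)
  finally have self_bound: "?g\<^sup>2 \<le> 1 + ?c * ?D + ?c * BH" .
  have "inner (Phi x) (Phi x) \<le> kappa\<^sup>2"
    using norm_Phi_le[OF x] by (metis norm_ge_zero power2_norm_eq_inner power_mono)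
  then have "?g\<^sup>2 * inner (Phi x) (Phi x) \<le> (1 + ?c * ?D + ?c * BH) * kappa\<^sup>2"
    using self_bound by (meson mult_mono zero_le_power2 order_trans inner_ge_zero)
  then have "?e\<^sup>2 * (?g\<^sup>2 * inner (Phi x) (Phi x)) \<le> ?e\<^sup>2 * ((1 + ?c * ?D + ?c * BH) * kappa\<^sup>2)"
    by (simp add: mult_left_mono)
  moreover have "2 * ?e * ?D \<le> 2 * ?e * (?g * (?s - ?h))"
    using tangent eta_nonneg[OF t] by (simp add: mult_left_mono)
  ultimately show ?thesis
    unfolding expand descent_weight_def noise_const_def by (simp add: algebra_simps)
qed

lemma measurable_rho_components:
  assumes f: "f \<in> measurable M rho"
  shows "(\<lambda>m. fst (f m)) \<in> borel_measurable M" "(\<lambda>m. snd (f m)) \<in> borel_measurable M"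
    "m \<in> space M \<Longrightarrow> fst (f m) \<in> X" "m \<in> space M \<Longrightarrow> snd (f m) \<in> Y"
proof -
  have "f \<in> measurable M (restrict_space borel (X \<times> Y))"
    using f measurable_cong_sets[of M M rho "restrict_space borel (X \<times> Y)"] rho_sets by simp
  then have fb: "f \<in> measurable M (borel \<Otimes>\<^sub>M borel)" and fs: "f \<in> space M \<rightarrow> X \<times> Y"
    by (auto simp: measurable_restrict_space2_iff borel_prod)
  then show "(\<lambda>m. fst (f m)) \<in> borel_measurable M" "(\<lambda>m. snd (f m)) \<in> borel_measurable M"
    by (auto intro: measurable_fst' measurable_snd')
  show "m \<in> space M \<Longrightarrow> fst (f m) \<in> X" "m \<in> space M \<Longrightarrow> snd (f m) \<in> Y"
    using funcset_mem[OF fs] by (auto simp: mem_Times_iff)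
qed

lemma Phi_continuous: "continuous_on X Phi"
proof (rule continuous_on_feature_map)
  have "continuous_on (X \<times> X) (\<lambda>(x, x'). K x x') = continuous_on (X \<times> X) (\<lambda>(x, x'). inner (Phi x) (Phi x'))"
    using K_feature by (intro continuous_on_cong) auto
  then show "continuous_on (X \<times> X) (\<lambda>(x, x'). inner (Phi x) (Phi x'))"
    using K_cont by simp
qed

lemma measurable_K:
  "a \<in> borel_measurable M \<Longrightarrow> b \<in> borel_measurable M \<Longrightarrow> (\<And>m. m \<in> space M \<Longrightarrow> a m \<in> X)
    \<Longrightarrow> (\<And>m. m \<in> space M \<Longrightarrow> b m \<in> X) \<Longrightarrow> (\<lambda>m. K (a m) (b m)) \<in> borel_measurable M"
  using borel_measurable_continuous_on_compose[OF K_cont, of "\<lambda>m. (a m, b m)" M] by auto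

lemma measurable_eval:
  "a \<in> borel_measurable M \<Longrightarrow> (\<And>m. m \<in> space M \<Longrightarrow> a m \<in> X)
    \<Longrightarrow> (\<lambda>m. inner h (Phi (a m))) \<in> borel_measurable M"
  by (rule borel_measurable_continuous_on_compose[OF continuous_on_inner[OF continuous_on_const Phi_continuous]])

lemma measurable_phi:
  assumes "y \<in> borel_measurable M" "s \<in> borel_measurable M" "\<And>m. m \<in> space M \<Longrightarrow> y m \<in> Y"
  shows "(\<lambda>m. phi (y m) (s m)) \<in> borel_measurable M"
proof -
  have "(\<lambda>m. (y m, s m)) \<in> measurable M (restrict_space borel (Y \<times> UNIV))"
    using assms by (intro measurable_restrict_space2) auto
  from measurable_compose[OF this phi_meas] show ?thesis by simp
qed

lemma measurable_dphi:
  assumes y: "y \<in> borel_measurable M" and s: "s \<in> borel_measurable M" and yY: "\<And>m. m \<in> space M \<Longrightarrow> y m \<in> Y"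
  shows "(\<lambda>m. dphi (y m) (s m)) \<in> borel_measurable M"
proof (rule borel_measurable_LIMSEQ_real)
  fix m assume "m \<in> space M"
  then show "(\<lambda>n. (phi (y m) (s m + 1 / Suc n) - phi (y m) (s m)) / (1 / Suc n)) \<longlonglongrightarrow> dphi (y m) (s m)"
    using phi_deriv yY by (intro DERIV_difference_quotient_sequence) auto
next
  fix n
  have "(\<lambda>m. phi (y m) (s m + 1 / Suc n)) \<in> borel_measurable M" "(\<lambda>m. phi (y m) (s m)) \<in> borel_measurable M"
    using y s yY by (intro measurable_phi; simp)+
  then show "(\<lambda>m. (phi (y m) (s m + 1 / Suc n) - phi (y m) (s m)) / (1 / Suc n)) \<in> borel_measurable M"
    by measurable
qed

text \<open>Since \<open>'h\<close> need not be separable, measurability of the iterates is argued through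
  their coefficients in the expansion \<open>f\<^sub>t = - \<Sum>j<t. c\<^sub>j K\<^sub>x\<^sub>j\<close>, which are real-valued.\<close>

definition ogd_coef :: "(nat \<Rightarrow> 'a \<times> real) \<Rightarrow> nat \<Rightarrow> real" where
  "ogd_coef w j = eta j * dphi (snd (w j)) (inner (ogd_iter w j) (Phi (fst (w j))))"

lemma ogd_iter_eq_sum: "ogd_iter w t = - (\<Sum>j\<in>{1..<t}. ogd_coef w j *\<^sub>R Phi (fst (w j)))"
proof (induction t)
  case (Suc t)
  then show ?case
    by (cases "t = 0") (auto simp: ogd_coef_def atLeastLessThanSuc)
qed simp

lemma inner_ogd_iter_Phi:
  "(\<And>j. 1 \<le> j \<Longrightarrow> j < t \<Longrightarrow> fst (w j) \<in> X) \<Longrightarrow> x \<in> X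
    \<Longrightarrow> inner (ogd_iter w t) (Phi x) = - (\<Sum>j\<in>{1..<t}. ogd_coef w j * K (fst (w j)) x)"
  unfolding ogd_iter_eq_sum[of w t] using K_feature by (simp add: inner_sum_left)

lemma measurable_ogd_coef:
  assumes "\<And>j. 1 \<le> j \<Longrightarrow> j < t \<Longrightarrow> (\<lambda>m. w m j) \<in> measurable M rho"
  shows "1 \<le> j \<Longrightarrow> j < t \<Longrightarrow> (\<lambda>m. ogd_coef (w m) j) \<in> borel_measurable M"
  using assms
proof (induction t arbitrary: j)
  case (Suc t)
  show ?case
  proof (cases "j < t")
    case True then show ?thesis using Suc by auto
  next
    case False
    then have j: "j = t" using Suc by auto
    have wt: "(\<lambda>m. w m t) \<in> measurable M rho" using Suc.prems j by auto
    have wi: "\<And>i. 1 \<le> i \<Longrightarrow> i < t \<Longrightarrow> (\<lambda>m. w m i) \<in> measurable M rho" using Suc.prems by auto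
    have IH: "(\<lambda>m. ogd_coef (w m) i) \<in> borel_measurable M" if "1 \<le> i" "i < t" for i
      using Suc.IH[OF that wi] by simp
    have "(\<lambda>m. eta t * dphi (snd (w m t))
         (- (\<Sum>i\<in>{1..<t}. ogd_coef (w m) i * K (fst (w m i)) (fst (w m t))))) \<in> borel_measurable M"
    proof (intro borel_measurable_times borel_measurable_const measurable_dphi borel_measurable_uminus
        borel_measurable_sum)
      fix i assume "i \<in> {1..<t}"
      then have i: "1 \<le> i" "i < t" by auto
      show "(\<lambda>m. ogd_coef (w m) i) \<in> borel_measurable M" by (rule IH[OF i])
      show "(\<lambda>m. K (fst (w m i)) (fst (w m t))) \<in> borel_measurable M"
        using measurable_rho_components[OF wi[OF i]] measurable_rho_components[OF wt]
        by (intro measurable_K) auto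
    qed (fact measurable_rho_components[OF wt])+
    moreover have "ogd_coef (w m) t = eta t * dphi (snd (w m t))
         (- (\<Sum>i\<in>{1..<t}. ogd_coef (w m) i * K (fst (w m i)) (fst (w m t))))" if "m \<in> space M" for m
    proof -
      have "fst (w m i) \<in> X" if "1 \<le> i" "i < t" for i
        using measurable_rho_components(3)[OF wi[OF that] \<open>m \<in> space M\<close>] .
      then show ?thesis
        unfolding ogd_coef_def[of "w m" t]
        using inner_ogd_iter_Phi[of t "w m" "fst (w m t)"] measurable_rho_components(3)[OF wt that] by simp
    qed
    ultimately show ?thesis unfolding j by (subst measurable_cong) auto
  qed
qed simp

lemma measurable_inner_ogd_iter:
  assumes w: "\<And>j. 1 \<le> j \<Longrightarrow> j < t \<Longrightarrow> (\<lambda>m. w m j) \<in> measurable M rho"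
    and a: "a \<in> borel_measurable M" and aX: "\<And>m. m \<in> space M \<Longrightarrow> a m \<in> X"
  shows "(\<lambda>m. inner (ogd_iter (w m) t) (Phi (a m))) \<in> borel_measurable M"
proof -
  have "(\<lambda>m. - (\<Sum>j\<in>{1..<t}. ogd_coef (w m) j * K (fst (w m j)) (a m))) \<in> borel_measurable M"
    using measurable_ogd_coef[OF w] measurable_rho_components[OF w] a aX
    by (intro borel_measurable_uminus borel_measurable_sum borel_measurable_times measurable_K) auto
  moreover have "inner (ogd_iter (w m) t) (Phi (a m))
      = - (\<Sum>j\<in>{1..<t}. ogd_coef (w m) j * K (fst (w m j)) (a m))" if "m \<in> space M" for m
  proof -
    have "fst (w m j) \<in> X" if "1 \<le> j" "j < t" for j
      using measurable_rho_components(3)[OF w[OF that] \<open>m \<in> space M\<close>] .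
    then show ?thesis using aX[OF that] by (rule inner_ogd_iter_Phi)
  qed
  ultimately show ?thesis by (simp cong: measurable_cong)
qed

lemma measurable_ogd_iter_dist:
  assumes w: "\<And>j. 1 \<le> j \<Longrightarrow> j < t \<Longrightarrow> (\<lambda>m. w m j) \<in> measurable M rho"
  shows "(\<lambda>m. (norm (ogd_iter (w m) t - fH))\<^sup>2) \<in> borel_measurable M"
proof -
  have "(norm (ogd_iter (w m) t - fH))\<^sup>2 =
      - (\<Sum>j\<in>{1..<t}. ogd_coef (w m) j * inner (ogd_iter (w m) t) (Phi (fst (w m j))))
      + 2 * (\<Sum>j\<in>{1..<t}. ogd_coef (w m) j * inner fH (Phi (fst (w m j)))) + inner fH fH" for m
  proof -
    have "inner (ogd_iter (w m) t) (ogd_iter (w m) t)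
        = - (\<Sum>j\<in>{1..<t}. ogd_coef (w m) j * inner (ogd_iter (w m) t) (Phi (fst (w m j))))"
      by (subst (2) ogd_iter_eq_sum) (simp add: inner_sum_right)
    moreover have "inner (ogd_iter (w m) t) fH = - (\<Sum>j\<in>{1..<t}. ogd_coef (w m) j * inner fH (Phi (fst (w m j))))"
      by (subst ogd_iter_eq_sum) (simp add: inner_sum_left inner_commute[of "Phi _" fH])
    ultimately show ?thesis unfolding power2_norm_eq_inner
      by (simp add: inner_diff_left inner_diff_right inner_commute)
  qed
  moreover have "(\<lambda>m. - (\<Sum>j\<in>{1..<t}. ogd_coef (w m) j * inner (ogd_iter (w m) t) (Phi (fst (w m j))))
      + 2 * (\<Sum>j\<in>{1..<t}. ogd_coef (w m) j * inner fH (Phi (fst (w m j)))) + inner fH fH) \<in> borel_measurable M"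
    using measurable_ogd_coef[OF w] measurable_rho_components[OF w]
    by (intro borel_measurable_add borel_measurable_uminus borel_measurable_sum borel_measurable_times
        borel_measurable_const measurable_inner_ogd_iter[OF w] measurable_eval) auto
  ultimately show ?thesis by simp
qed

definition loss :: "'h \<Rightarrow> 'a \<times> real \<Rightarrow> real" where
  "loss h z = phi (snd z) (inner h (Phi (fst z)))"

definition risk :: "'h \<Rightarrow> real" where
  "risk h = gen_err rho phi (rkhs_fun Phi h)"

lemma risk_eq_integral: "risk h = (\<integral>z. loss h z \<partial>rho)"
  by (simp add: risk_def gen_err_def rkhs_fun_def loss_def)

lemma rho_space_mem: "z \<in> space rho \<Longrightarrow> fst z \<in> X \<and> snd z \<in> Y"
  by (metis rho_space mem_Times_iff)

lemma measurable_loss: "loss h \<in> borel_measurable rho"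
proof -
  note components = measurable_rho_components[OF measurable_ident_sets[OF refl]]
  have "(\<lambda>z. phi (snd z) (inner h (Phi (fst z)))) \<in> borel_measurable rho"
    using components rho_space_mem by (intro measurable_phi measurable_eval) auto
  then show ?thesis by (simp add: loss_def[abs_def])
qed

lemma loss_bounds:
  assumes z: "z \<in> space rho" and h: "norm h \<le> R"
  shows "0 \<le> loss h z" "loss h z \<le> B0 + lip (R * kappa) * (R * kappa)"
proof -
  have x: "fst z \<in> X" and y: "snd z \<in> Y" using rho_space_mem[OF z] by auto
  have "\<bar>inner h (Phi (fst z))\<bar> \<le> R * kappa"
    using eval_bound[OF x, of h] h kappa_nonneg by (meson mult_right_mono order.trans)
  then show "loss h z \<le> B0 + lip (R * kappa) * (R * kappa)"
    unfolding loss_def by (rule phi_le[OF y])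
  show "0 \<le> loss h z" using phi_nonneg y by (simp add: loss_def)
qed

lemma integrable_loss: "integrable rho (loss h)"
proof -
  interpret rho: prob_space rho by (rule rho_prob)
  show ?thesis
    using loss_bounds[of _ h "norm h"] measurable_loss
    by (intro rho.integrable_const_bound[where B="B0 + lip (norm h * kappa) * (norm h * kappa)"] AE_I2) auto
qed

lemma risk_nonneg: "0 \<le> risk h"
  unfolding risk_eq_integral using loss_bounds(1)[of _ h "norm h"] by (intro integral_nonneg_AE AE_I2) auto

lemma risk_le: "norm h \<le> R \<Longrightarrow> risk h \<le> B0 + lip (R * kappa) * (R * kappa)"
proof -
  interpret rho: prob_space rho by (rule rho_prob)
  assume "norm h \<le> R"
  then have "(\<integral>z. loss h z \<partial>rho) \<le> (\<integral>z. B0 + lip (R * kappa) * (R * kappa) \<partial>rho)"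
    using loss_bounds(2) integrable_loss by (intro integral_mono) auto
  then show ?thesis by (simp add: risk_eq_integral rho.prob_space)
qed

lemma risk_lipschitz:
  assumes h1: "norm h1 \<le> R" and h2: "norm h2 \<le> R"
  shows "\<bar>risk h1 - risk h2\<bar> \<le> lip (R * kappa) * kappa * norm (h1 - h2)"
proof -
  interpret rho: prob_space rho by (rule rho_prob)
  have R_nonneg: "0 \<le> R" using h1 norm_ge_zero order_trans by blast
  have pointwise: "\<bar>loss h1 z - loss h2 z\<bar> \<le> lip (R * kappa) * kappa * norm (h1 - h2)"
    if z: "z \<in> space rho" for z
  proof -
    have x: "fst z \<in> X" and y: "snd z \<in> Y" using rho_space_mem[OF z] by auto
    have "\<bar>inner h (Phi (fst z))\<bar> \<le> R * kappa" if "norm h \<le> R" for h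
      using eval_bound[OF x, of h] that kappa_nonneg by (meson mult_right_mono order.trans)
    then have "\<bar>loss h1 z - loss h2 z\<bar>
        \<le> lip (R * kappa) * \<bar>inner h1 (Phi (fst z)) - inner h2 (Phi (fst z))\<bar>"
      unfolding loss_def using h1 h2 by (intro phi_lipschitz[OF y])
    also have "\<dots> \<le> lip (R * kappa) * (norm (h1 - h2) * kappa)"
      using eval_bound[OF x, of "h1 - h2"] lip_nonneg[OF mult_nonneg_nonneg[OF R_nonneg kappa_nonneg]]
      by (intro mult_left_mono) (auto simp: inner_diff_left)
    finally show ?thesis by (simp add: ac_simps)
  qed
  have "\<bar>risk h1 - risk h2\<bar> = \<bar>\<integral>z. loss h1 z - loss h2 z \<partial>rho\<bar>"
    by (simp add: risk_eq_integral integrable_loss)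
  also have "\<dots> \<le> (\<integral>z. \<bar>loss h1 z - loss h2 z\<bar> \<partial>rho)" by (rule integral_abs_bound)
  also have "\<dots> \<le> (\<integral>z. lip (R * kappa) * kappa * norm (h1 - h2) \<partial>rho)"
    using pointwise integrable_loss by (intro integral_mono) auto
  finally show ?thesis by (simp add: rho.prob_space)
qed

section \<open>The iterates as a stochastic process\<close>

abbreviation Past :: "nat \<Rightarrow> (nat \<Rightarrow> 'a \<times> real) measure" where
  "Past t \<equiv> PiM {1..<t} (\<lambda>_. rho)"

definition past :: "nat \<Rightarrow> 'w \<Rightarrow> nat \<Rightarrow> 'a \<times> real" where
  "past t \<omega> = restrict (\<lambda>i. Z i \<omega>) {1..<t}"

abbreviation iterate :: "'w \<Rightarrow> nat \<Rightarrow> 'h" where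
  "iterate \<omega> t \<equiv> ogd_iter (\<lambda>i. Z i \<omega>) t"

lemma Z_measurable: "1 \<le> t \<Longrightarrow> Z t \<in> measurable P rho"
  using Z_indep P_prob unfolding prob_space.indep_vars_def[OF P_prob] by auto

lemma Z_in_XY: "1 \<le> t \<Longrightarrow> \<omega> \<in> space P \<Longrightarrow> Z t \<omega> \<in> X \<times> Y"
  using measurable_space[OF Z_measurable] rho_space by blast

lemma measurable_past: "past t \<in> measurable P (Past t)"
  unfolding past_def by (intro measurable_restrict) (auto intro: Z_measurable)

lemma space_Past_in_XY: "w \<in> space (Past t) \<Longrightarrow> 1 \<le> i \<Longrightarrow> i < t \<Longrightarrow> w i \<in> X \<times> Y"
  unfolding space_PiM rho_space[symmetric] by (simp add: PiE_iff)

lemma measurable_Past_component: "1 \<le> j \<Longrightarrow> j < t \<Longrightarrow> (\<lambda>w. w j) \<in> measurable (Past t) rho"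
  by (rule measurable_component_singleton) auto

lemma iterate_eq_past: "iterate \<omega> t = ogd_iter (past t \<omega>) t"
  by (rule ogd_iter_cong) (simp add: past_def)

lemma ogd_iter_bounded_on_Past: "\<exists>b. \<forall>w\<in>space (Past t). norm (ogd_iter w t) \<le> b"
proof -
  from ogd_iter_bounded[of t]
  obtain b where "\<forall>w. (\<forall>i. 1 \<le> i \<longrightarrow> i < t \<longrightarrow> w i \<in> X \<times> Y) \<longrightarrow> norm (ogd_iter w t) \<le> b" ..
  then have "\<forall>w\<in>space (Past t). norm (ogd_iter w t) \<le> b" using space_Past_in_XY by simp
  then show ?thesis ..
qed

lemma iterate_bounded: "\<exists>b. \<forall>\<omega>\<in>space P. norm (iterate \<omega> t) \<le> b"
proof -
  from ogd_iter_bounded[of t]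
  obtain b where "\<forall>w. (\<forall>i. 1 \<le> i \<longrightarrow> i < t \<longrightarrow> w i \<in> X \<times> Y) \<longrightarrow> norm (ogd_iter w t) \<le> b" ..
  then have "\<forall>\<omega>\<in>space P. norm (iterate \<omega> t) \<le> b" using Z_in_XY by simp
  then show ?thesis ..
qed

text \<open>\<open>adapted t G\<close>: \<open>G\<close> is a measurable function of the past samples \<open>z\<^sub>1, \<dots>, z\<^sub>t\<^sub>-\<^sub>1\<close>,
  i.e.\ \<open>G\<close> is measurable for the \<open>\<sigma>\<close>-algebra they generate, in Doob--Dynkin form.\<close>

definition adapted :: "nat \<Rightarrow> ('w \<Rightarrow> real) \<Rightarrow> bool" where
  "adapted t G \<longleftrightarrow> (\<exists>g \<in> borel_measurable (Past t). \<forall>\<omega>\<in>space P. G \<omega> = g (past t \<omega>))"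

lemma adapted_measurable:
  assumes "adapted t G"
  shows "G \<in> borel_measurable P"
proof -
  obtain g where g: "g \<in> borel_measurable (Past t)" and G: "\<forall>\<omega>\<in>space P. G \<omega> = g (past t \<omega>)"
    using assms by (auto simp: adapted_def)
  have "G \<in> borel_measurable P \<longleftrightarrow> (\<lambda>\<omega>. g (past t \<omega>)) \<in> borel_measurable P"
    using G by (intro measurable_cong) auto
  then show ?thesis using measurable_compose[OF measurable_past g] by simp
qed

lemma adapted_mono:
  assumes "adapted t G" "t \<le> s"
  shows "adapted s G"
proof -
  obtain g where g: "g \<in> borel_measurable (Past t)" and G: "\<forall>\<omega>\<in>space P. G \<omega> = g (past t \<omega>)"
    using assms(1) by (auto simp: adapted_def)
  have "(\<lambda>w. restrict w {1..<t}) \<in> measurable (Past s) (Past t)"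
    using assms(2) by (intro measurable_restrict_subset) auto
  then have "(\<lambda>w. g (restrict w {1..<t})) \<in> borel_measurable (Past s)"
    using g by (rule measurable_compose)
  moreover have "past t \<omega> = restrict (past s \<omega>) {1..<t}" for \<omega>
    using assms(2) by (auto simp: past_def fun_eq_iff)
  ultimately show ?thesis unfolding adapted_def using G by (intro bexI) auto
qed

lemma adapted_const: "adapted t (\<lambda>_. c)"
  unfolding adapted_def by (intro bexI[of _ "\<lambda>_. c"]) auto

lemma adapted_add_const:
  assumes "adapted t G"
  shows "adapted t (\<lambda>\<omega>. G \<omega> + c)"
proof -
  obtain g where "g \<in> borel_measurable (Past t)" "\<forall>\<omega>\<in>space P. G \<omega> = g (past t \<omega>)"
    using assms by (auto simp: adapted_def)
  then show ?thesis unfolding adapted_def by (intro bexI[of _ "\<lambda>w. g w + c"]) auto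
qed

lemma adapted_all_less:
  assumes "finite I" and adapted: "\<And>s. s \<in> I \<Longrightarrow> adapted t (G s)"
  shows "adapted t (\<lambda>\<omega>. of_bool (\<forall>s\<in>I. G s \<omega> < c))"
proof -
  have "\<forall>s\<in>I. \<exists>g. g \<in> borel_measurable (Past t) \<and> (\<forall>\<omega>\<in>space P. G s \<omega> = g (past t \<omega>))"
    using adapted by (auto simp: adapted_def)
  then obtain g where g: "\<And>s. s \<in> I \<Longrightarrow> g s \<in> borel_measurable (Past t)"
    and G: "\<And>s \<omega>. s \<in> I \<Longrightarrow> \<omega> \<in> space P \<Longrightarrow> G s \<omega> = g s (past t \<omega>)"
    by (auto dest!: bchoice)
  have "(\<lambda>w. of_bool (\<forall>s\<in>I. g s w < c) :: real) \<in> borel_measurable (Past t)"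
    using \<open>finite I\<close> g by measurable
  then show ?thesis unfolding adapted_def using G by (intro bexI) auto
qed

lemma indep_past_present:
  assumes "1 \<le> t"
  shows "prob_space.indep_var P (Past t) (past t) (PiM {t} (\<lambda>_. rho)) (\<lambda>\<omega>. restrict (\<lambda>i. Z i \<omega>) {t})"
proof -
  interpret P: prob_space P by (rule P_prob)
  show ?thesis unfolding past_def using assms by (intro P.indep_var_restrict[OF Z_indep]) auto
qed

lemma integral_present_given_past:
  fixes h :: "(nat \<Rightarrow> 'a \<times> real) \<times> ('a \<times> real) \<Rightarrow> real"
  assumes t: "1 \<le> t" and h: "h \<in> borel_measurable (Past t \<Otimes>\<^sub>M rho)"
    and bounded: "\<And>p. p \<in> space (Past t \<Otimes>\<^sub>M rho) \<Longrightarrow> \<bar>h p\<bar> \<le> B"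
  shows "(\<integral>\<omega>. h (past t \<omega>, Z t \<omega>) \<partial>P) = (\<integral>\<omega>. (\<integral>z. h (past t \<omega>, z) \<partial>rho) \<partial>P)"
proof -
  interpret P: prob_space P by (rule P_prob)
  \<comment> \<open>\<open>indep_var\<close> needs both variables to take values in the same type, so \<open>z\<^sub>t\<close> enters as the
    one-point family on \<open>{t}\<close>.\<close>
  let ?S = "PiM {t} (\<lambda>_. rho)" and ?e = "\<lambda>z. restrict (\<lambda>_. z) {t} :: nat \<Rightarrow> 'a \<times> real"
  have pm: "(\<lambda>p. (fst p, snd p t)) \<in> measurable (Past t \<Otimes>\<^sub>M ?S) (Past t \<Otimes>\<^sub>M rho)"
    by (intro measurable_Pair measurable_fst measurable_compose[OF measurable_snd measurable_component_singleton]) auto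
  have h': "(\<lambda>p. h (fst p, snd p t)) \<in> borel_measurable (Past t \<Otimes>\<^sub>M ?S)"
    using measurable_compose[OF pm h] by simp
  have e: "?e \<in> measurable rho ?S" by (intro measurable_restrict) auto
  have law: "distr P ?S (\<lambda>\<omega>. restrict (\<lambda>i. Z i \<omega>) {t}) = distr rho ?S ?e"
  proof -
    have "(\<lambda>\<omega>. restrict (\<lambda>i. Z i \<omega>) {t}) = ?e \<circ> Z t" by (auto simp: fun_eq_iff)
    moreover have "distr P ?S (?e \<circ> Z t) = distr (distr P rho (Z t)) ?S ?e"
      by (rule distr_distr[symmetric, OF e Z_measurable[OF t]])
    ultimately show ?thesis using Z_distr t by simp
  qed
  have "(\<integral>\<omega>. h (past t \<omega>, Z t \<omega>) \<partial>P) = (\<integral>\<omega>. h (past t \<omega>, restrict (\<lambda>i. Z i \<omega>) {t} t) \<partial>P)"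
    by simp
  also have "\<dots> = (\<integral>\<omega>. (\<integral>v. h (past t \<omega>, v t) \<partial>distr rho ?S ?e) \<partial>P)"
    using P.integral_indep_var_pair[OF indep_past_present[OF t] h', of B] bounded measurable_space[OF pm]
    unfolding law by fastforce
  also have "\<dots> = (\<integral>\<omega>. (\<integral>z. h (past t \<omega>, z) \<partial>rho) \<partial>P)"
  proof (intro Bochner_Integration.integral_cong refl)
    fix \<omega> assume "\<omega> \<in> space P"
    then have "(\<lambda>v. h (past t \<omega>, v t)) \<in> borel_measurable ?S"
      using measurable_compose[OF measurable_Pair1'[of "past t \<omega>" "Past t" ?S] h'] measurable_space[OF measurable_past]
      by simp
    then show "(\<integral>v. h (past t \<omega>, v t) \<partial>distr rho ?S ?e) = (\<integral>z. h (past t \<omega>, z) \<partial>rho)"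
      by (subst integral_distr[OF e]) auto
  qed
  finally show ?thesis .
qed

definition dist2 :: "nat \<Rightarrow> 'w \<Rightarrow> real" where
  "dist2 t \<omega> = (norm (iterate \<omega> t - fH))\<^sup>2"

definition excess :: "nat \<Rightarrow> 'w \<Rightarrow> real" where
  "excess t \<omega> = risk (iterate \<omega> t) - risk fH"

definition loss_gap :: "nat \<Rightarrow> (nat \<Rightarrow> 'a \<times> real) \<times> ('a \<times> real) \<Rightarrow> real" where
  "loss_gap t p = loss (ogd_iter (fst p) t) (snd p) - loss fH (snd p)"

lemma excess_nonneg: "0 \<le> excess t \<omega>"
  using fH_min by (simp add: excess_def risk_def)

lemma integrable_adapted_bounded:
  assumes "adapted t G" "\<And>\<omega>. \<omega> \<in> space P \<Longrightarrow> \<bar>G \<omega>\<bar> \<le> B"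
  shows "integrable P G"
proof -
  interpret P: prob_space P by (rule P_prob)
  show ?thesis using assms adapted_measurable by (intro P.integrable_const_bound[where B=B] AE_I2) auto
qed

lemma adapted_dist2: "adapted t (dist2 t)"
proof -
  have "(\<lambda>w. (norm (ogd_iter w t - fH))\<^sup>2) \<in> borel_measurable (Past t)"
    using measurable_ogd_iter_dist[of t "\<lambda>w. w" "Past t"] measurable_Past_component by simp
  then show ?thesis unfolding adapted_def dist2_def iterate_eq_past by (rule bexI[rotated]) simp
qed

lemma measurable_loss_ogd_iter:
  "(\<lambda>p. loss (ogd_iter (fst p) t) (snd p)) \<in> borel_measurable (Past t \<Otimes>\<^sub>M rho)"
proof -
  have snd_meas: "snd \<in> measurable (Past t \<Otimes>\<^sub>M rho) rho" by simp
  have "\<And>p. p \<in> space (Past t \<Otimes>\<^sub>M rho) \<Longrightarrow> fst (snd p) \<in> X \<and> snd (snd p) \<in> Y"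
    using rho_space_mem by (auto simp: space_pair_measure)
  moreover have "\<And>j. 1 \<le> j \<Longrightarrow> j < t \<Longrightarrow> (\<lambda>p. fst p j) \<in> measurable (Past t \<Otimes>\<^sub>M rho) rho"
    using measurable_Past_component by (intro measurable_compose[OF measurable_fst]) auto
  ultimately show ?thesis
    unfolding loss_def using measurable_rho_components[OF snd_meas]
    by (intro measurable_phi measurable_inner_ogd_iter) auto
qed

lemma adapted_excess: "adapted t (excess t)"
proof -
  interpret rho: prob_space rho by (rule rho_prob)
  have "(\<lambda>w. \<integral>z. loss (ogd_iter w t) z \<partial>rho) \<in> borel_measurable (Past t)"
    using measurable_loss_ogd_iter by (intro rho.borel_measurable_lebesgue_integral) simp
  then have "(\<lambda>w. risk (ogd_iter w t) - risk fH) \<in> borel_measurable (Past t)"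
    unfolding risk_eq_integral by simp
  then show ?thesis unfolding adapted_def excess_def iterate_eq_past by (rule bexI[rotated]) simp
qed

lemma dist2_bounded: "\<exists>B. \<forall>\<omega>\<in>space P. \<bar>dist2 t \<omega>\<bar> \<le> B"
proof -
  from iterate_bounded[of t] obtain b where b: "\<forall>\<omega>\<in>space P. norm (iterate \<omega> t) \<le> b" ..
  have "\<bar>dist2 t \<omega>\<bar> \<le> (b + norm fH)\<^sup>2" if "\<omega> \<in> space P" for \<omega>
  proof -
    have "norm (iterate \<omega> t - fH) \<le> b + norm fH"
      using b that norm_triangle_ineq4[of "iterate \<omega> t" fH] by auto
    then show ?thesis by (simp add: dist2_def power_mono)
  qed
  then show ?thesis by blast
qed

lemma excess_bounded: "\<exists>B. \<forall>\<omega>\<in>space P. \<bar>excess t \<omega>\<bar> \<le> B"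
proof -
  from iterate_bounded[of t] obtain b where b: "\<forall>\<omega>\<in>space P. norm (iterate \<omega> t) \<le> b" ..
  have "\<bar>excess t \<omega>\<bar> \<le> B0 + lip (b * kappa) * (b * kappa)" if "\<omega> \<in> space P" for \<omega>
    using risk_le[of "iterate \<omega> t" b] b that risk_nonneg[of fH] risk_nonneg[of "iterate \<omega> t"]
      fH_min excess_nonneg[of t \<omega>] by (auto simp: excess_def)
  then show ?thesis by blast
qed

lemma loss_gap_bounded: "\<exists>B. \<forall>p\<in>space (Past t \<Otimes>\<^sub>M rho). \<bar>loss_gap t p\<bar> \<le> B"
proof -
  from ogd_iter_bounded_on_Past[of t] obtain b where b: "\<forall>w\<in>space (Past t). norm (ogd_iter w t) \<le> b" ..
  have "\<bar>loss_gap t p\<bar> \<le> (B0 + lip (b * kappa) * (b * kappa)) + (B0 + lip (norm fH * kappa) * (norm fH * kappa))"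
    if "p \<in> space (Past t \<Otimes>\<^sub>M rho)" for p
  proof -
    have w: "fst p \<in> space (Past t)" and z: "snd p \<in> space rho"
      using that by (auto simp: space_pair_measure)
    show ?thesis
      using loss_bounds[OF z, of "ogd_iter (fst p) t" b] loss_bounds[OF z, of fH "norm fH"] b w
      unfolding loss_gap_def by auto
  qed
  then show ?thesis by blast
qed

lemma integrable_dist2: "integrable P (dist2 t)"
  using dist2_bounded[of t] adapted_dist2 integrable_adapted_bounded by metis

lemma integrable_excess: "integrable P (excess t)"
  using excess_bounded[of t] adapted_excess integrable_adapted_bounded by metis

lemma measurable_present: "1 \<le> t \<Longrightarrow> (\<lambda>\<omega>. (past t \<omega>, Z t \<omega>)) \<in> measurable P (Past t \<Otimes>\<^sub>M rho)"
  using measurable_past Z_measurable by (intro measurable_Pair) auto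

lemma integrable_loss_gap: "1 \<le> t \<Longrightarrow> integrable P (\<lambda>\<omega>. loss_gap t (past t \<omega>, Z t \<omega>))"
proof -
  interpret P: prob_space P by (rule P_prob)
  assume t: "1 \<le> t"
  obtain B where B: "\<forall>p\<in>space (Past t \<Otimes>\<^sub>M rho). \<bar>loss_gap t p\<bar> \<le> B"
    using loss_gap_bounded by blast
  have "loss_gap t \<in> borel_measurable (Past t \<Otimes>\<^sub>M rho)"
    unfolding loss_gap_def[abs_def]
    using measurable_loss_ogd_iter measurable_compose[OF measurable_snd measurable_loss] by measurable
  then show ?thesis
    using measurable_space[OF measurable_present[OF t]] B
    by (intro P.integrable_const_bound[where B=B] AE_I2 measurable_compose[OF measurable_present[OF t]]) auto
qed

lemma integral_loss_gap:
  assumes t: "1 \<le> t" and G: "adapted t G" and G01: "\<And>\<omega>. \<omega> \<in> space P \<Longrightarrow> 0 \<le> G \<omega> \<and> G \<omega> \<le> 1"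
  shows "(\<integral>\<omega>. G \<omega> * loss_gap t (past t \<omega>, Z t \<omega>) \<partial>P) = (\<integral>\<omega>. G \<omega> * excess t \<omega> \<partial>P)"
proof -
  obtain g where g: "g \<in> borel_measurable (Past t)" and G_eq: "\<forall>\<omega>\<in>space P. G \<omega> = g (past t \<omega>)"
    using G by (auto simp: adapted_def)
  define g' where "g' w = max 0 (min 1 (g w))" for w
  have G_eq': "G \<omega> = g' (past t \<omega>)" if "\<omega> \<in> space P" for \<omega>
    using G_eq G01 that unfolding g'_def by (metis max_absorb2 min_absorb2)
  obtain B where B: "\<forall>p\<in>space (Past t \<Otimes>\<^sub>M rho). \<bar>loss_gap t p\<bar> \<le> B"
    using loss_gap_bounded by blast
  have h: "(\<lambda>p. g' (fst p) * loss_gap t p) \<in> borel_measurable (Past t \<Otimes>\<^sub>M rho)"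
    unfolding g'_def loss_gap_def[abs_def]
    using g measurable_loss_ogd_iter measurable_compose[OF measurable_snd measurable_loss] by measurable
  have bounded: "\<bar>g' (fst p) * loss_gap t p\<bar> \<le> B" if "p \<in> space (Past t \<Otimes>\<^sub>M rho)" for p
  proof -
    have "\<bar>g' (fst p)\<bar> * \<bar>loss_gap t p\<bar> \<le> \<bar>loss_gap t p\<bar>"
      by (rule mult_left_le_one_le) (auto simp: g'_def)
    moreover have "\<bar>loss_gap t p\<bar> \<le> B" using B that by blast
    ultimately show ?thesis by (simp add: abs_mult)
  qed
  have "(\<integral>\<omega>. g' (past t \<omega>) * loss_gap t (past t \<omega>, Z t \<omega>) \<partial>P)
      = (\<integral>\<omega>. (\<integral>z. g' (past t \<omega>) * loss_gap t (past t \<omega>, z) \<partial>rho) \<partial>P)"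
    using integral_present_given_past[OF t h bounded] by simp
  also have "\<dots> = (\<integral>\<omega>. g' (past t \<omega>) * excess t \<omega> \<partial>P)"
    by (intro Bochner_Integration.integral_cong refl)
      (simp add: loss_gap_def excess_def risk_eq_integral integrable_loss iterate_eq_past)
  finally show ?thesis
    using G_eq' by (simp cong: Bochner_Integration.integral_cong)
qed

lemma dist2_step:
  assumes t: "1 \<le> t" and \<omega>: "\<omega> \<in> space P"
  shows "dist2 (Suc t) \<omega> \<le> dist2 t \<omega> - descent_weight t * loss_gap t (past t \<omega>, Z t \<omega>) + (eta t)\<^sup>2 * noise_const"
proof -
  obtain x y where xy: "Z t \<omega> = (x, y)" by fastforce
  then have "x \<in> X" "y \<in> Y" using Z_in_XY[OF t \<omega>] by auto
  from ogd_iter_dist_step[of t "\<lambda>i. Z i \<omega>", OF t _ this] xy show ?thesis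
    by (simp add: dist2_def loss_gap_def loss_def iterate_eq_past[symmetric])
qed

section \<open>The supermartingale and almost sure convergence\<close>

lemma eta_tendsto_zero: "eta \<longlonglongrightarrow> 0"
proof -
  have "(\<lambda>t. eta (t + 1)) \<longlonglongrightarrow> 0"
    using alpha by (intro tendsto_zero_if_summable_powr[OF _ _ eta_sum]) (auto intro: eta_nonneg)
  then show ?thesis by (simp add: filterlim_sequentially_Suc)
qed

lemma summable_eta_sq: "summable (\<lambda>t. (eta t)\<^sup>2)"
proof -
  have "summable (\<lambda>t. (eta (t + 1))\<^sup>2)"
    using alpha by (intro summable_power2_if_summable_powr[OF _ _ _ eta_sum]) (auto intro: eta_nonneg)
  then show ?thesis using summable_Suc_iff[of "\<lambda>t. (eta t)\<^sup>2"] by simp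
qed

lemma eta_not_summable: "\<not> summable eta"
  using eta_div by (simp add: summable_Suc_iff)

text \<open>From time \<open>T0\<close> on the steps are small enough for \<open>descent_weight t \<ge> eta t\<close>.\<close>

definition T0 :: nat where
  "T0 = (LEAST T. 1 \<le> T \<and> (\<forall>t\<ge>T. kappa\<^sup>2 * self_bound_const * eta t \<le> 1))"

lemma T0: "1 \<le> T0" "T0 \<le> t \<Longrightarrow> kappa\<^sup>2 * self_bound_const * eta t \<le> 1"
proof -
  let ?c = "kappa\<^sup>2 * self_bound_const"
  have c: "0 < ?c + 1" using self_bound_const_pos by (simp add: add_nonneg_pos)
  have "\<forall>\<^sub>F t in sequentially. eta t < 1 / (?c + 1)"
    by (rule order_tendstoD(2)[OF eta_tendsto_zero]) (use c in simp)
  then obtain N where N: "\<forall>t\<ge>N. eta t < 1 / (?c + 1)"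
    unfolding eventually_sequentially by blast
  have "\<exists>T. 1 \<le> T \<and> (\<forall>t\<ge>T. ?c * eta t \<le> 1)"
  proof (intro exI[of _ "max N 1"] conjI allI impI)
    fix t assume t: "max N 1 \<le> t"
    have "?c * eta t \<le> (?c + 1) * eta t"
      using eta_nonneg[of t] t by (intro mult_right_mono) auto
    also have "\<dots> \<le> 1"
      using N t c by (simp add: pos_less_divide_eq mult.commute less_imp_le)
    finally show "?c * eta t \<le> 1" .
  qed simp
  then have "1 \<le> T0 \<and> (\<forall>t\<ge>T0. ?c * eta t \<le> 1)"
    unfolding T0_def by (rule LeastI_ex)
  then show "1 \<le> T0" "T0 \<le> t \<Longrightarrow> ?c * eta t \<le> 1" by auto
qed

lemma eta_le_descent_weight:
  assumes "T0 \<le> t"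
  shows "eta t \<le> descent_weight t"
proof -
  have "kappa\<^sup>2 * self_bound_const * (eta t)\<^sup>2 = (kappa\<^sup>2 * self_bound_const * eta t) * eta t"
    by (simp add: power2_eq_square)
  also have "\<dots> \<le> 1 * eta t"
    using T0 assms eta_nonneg[of t] by (intro mult_right_mono) auto
  finally show ?thesis by (simp add: descent_weight_def)
qed

definition tail_sq :: "nat \<Rightarrow> real" where "tail_sq t = (\<Sum>j. (eta (j + t))\<^sup>2)"

lemma tail_sq_Suc: "tail_sq t = (eta t)\<^sup>2 + tail_sq (Suc t)"
  using suminf_split_head[OF summable_eta_sq[THEN summable_ignore_initial_segment, of t]]
  by (simp add: tail_sq_def suminf_split_head summable_eta_sq[THEN summable_ignore_initial_segment])

lemma tail_sq_nonneg: "0 \<le> tail_sq t"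
  unfolding tail_sq_def using summable_eta_sq[THEN summable_ignore_initial_segment, of t]
  by (intro suminf_nonneg) auto

definition lyapunov :: "nat \<Rightarrow> 'w \<Rightarrow> real" where
  "lyapunov t \<omega> = dist2 t \<omega> + noise_const * tail_sq t"

lemma lyapunov_nonneg: "0 \<le> lyapunov t \<omega>"
  using noise_const_nonneg tail_sq_nonneg[of t] by (simp add: lyapunov_def dist2_def)

lemma adapted_lyapunov: "adapted t (lyapunov t)"
  unfolding lyapunov_def[abs_def] by (intro adapted_add_const adapted_dist2)

lemma integrable_lyapunov: "integrable P (lyapunov t)"
proof -
  interpret P: prob_space P by (rule P_prob)
  show ?thesis
    unfolding lyapunov_def[abs_def] by (intro Bochner_Integration.integrable_add integrable_dist2) auto
qed

lemma integrable_adapted_mult: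
  "adapted t G \<Longrightarrow> (\<And>\<omega>. \<omega> \<in> space P \<Longrightarrow> 0 \<le> G \<omega> \<and> G \<omega> \<le> 1) \<Longrightarrow> integrable P f
    \<Longrightarrow> integrable P (\<lambda>\<omega>. G \<omega> * f \<omega>)"
  by (rule integrable_mult_unit_bounded[OF _ adapted_measurable]) auto

lemma expected_dist2_step:
  assumes t: "1 \<le> t" and G: "adapted t G" and G01: "\<And>\<omega>. \<omega> \<in> space P \<Longrightarrow> 0 \<le> G \<omega> \<and> G \<omega> \<le> 1"
  shows "(\<integral>\<omega>. G \<omega> * dist2 (Suc t) \<omega> \<partial>P) \<le> (\<integral>\<omega>. G \<omega> * dist2 t \<omega> \<partial>P)
    - descent_weight t * (\<integral>\<omega>. G \<omega> * excess t \<omega> \<partial>P) + (eta t)\<^sup>2 * noise_const * (\<integral>\<omega>. G \<omega> \<partial>P)"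
proof -
  interpret P: prob_space P by (rule P_prob)
  let ?gap = "\<lambda>\<omega>. loss_gap t (past t \<omega>, Z t \<omega>)"
  have ints: "integrable P (\<lambda>\<omega>. G \<omega> * f \<omega>)" if "integrable P f" for f
    using G G01 that by (rule integrable_adapted_mult)
  have iG: "integrable P G" using ints[of "\<lambda>_. 1"] by simp
  have "(\<integral>\<omega>. G \<omega> * dist2 (Suc t) \<omega> \<partial>P)
      \<le> (\<integral>\<omega>. G \<omega> * dist2 t \<omega> - descent_weight t * (G \<omega> * ?gap \<omega>) + (eta t)\<^sup>2 * noise_const * G \<omega> \<partial>P)"
  proof (rule integral_mono[OF ints[OF integrable_dist2]])
    show "integrable P (\<lambda>\<omega>. G \<omega> * dist2 t \<omega> - descent_weight t * (G \<omega> * ?gap \<omega>) + (eta t)\<^sup>2 * noise_const * G \<omega>)"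
      using ints[OF integrable_dist2] ints[OF integrable_loss_gap[OF t]] iG by auto
    fix \<omega> assume \<omega>: "\<omega> \<in> space P"
    have "G \<omega> * dist2 (Suc t) \<omega> \<le> G \<omega> * (dist2 t \<omega> - descent_weight t * ?gap \<omega> + (eta t)\<^sup>2 * noise_const)"
      using dist2_step[OF t \<omega>] G01[OF \<omega>] by (intro mult_left_mono) auto
    then show "G \<omega> * dist2 (Suc t) \<omega> \<le> G \<omega> * dist2 t \<omega> - descent_weight t * (G \<omega> * ?gap \<omega>) + (eta t)\<^sup>2 * noise_const * G \<omega>"
      by (simp add: algebra_simps)
  qed
  also have "\<dots> = (\<integral>\<omega>. G \<omega> * dist2 t \<omega> \<partial>P) - descent_weight t * (\<integral>\<omega>. G \<omega> * excess t \<omega> \<partial>P)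
      + (eta t)\<^sup>2 * noise_const * (\<integral>\<omega>. G \<omega> \<partial>P)"
    using ints[OF integrable_dist2] ints[OF integrable_loss_gap[OF t]] iG integral_loss_gap[OF t G G01]
    by simp
  finally show ?thesis .
qed

lemma lyapunov_supermartingale:
  assumes t: "T0 \<le> t" and G: "adapted t G" and G01: "\<And>\<omega>. \<omega> \<in> space P \<Longrightarrow> 0 \<le> G \<omega> \<and> G \<omega> \<le> 1"
  shows "(\<integral>\<omega>. G \<omega> * lyapunov (Suc t) \<omega> \<partial>P)
    \<le> (\<integral>\<omega>. G \<omega> * lyapunov t \<omega> \<partial>P) - eta t * (\<integral>\<omega>. G \<omega> * excess t \<omega> \<partial>P)"
proof -
  interpret P: prob_space P by (rule P_prob)
  have ints: "integrable P (\<lambda>\<omega>. G \<omega> * f \<omega>)" if "integrable P f" for f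
    using G G01 that by (rule integrable_adapted_mult)
  have lyap: "(\<integral>\<omega>. G \<omega> * lyapunov s \<omega> \<partial>P)
      = (\<integral>\<omega>. G \<omega> * dist2 s \<omega> \<partial>P) + noise_const * tail_sq s * (\<integral>\<omega>. G \<omega> \<partial>P)" for s
    using ints[OF integrable_dist2] ints[of "\<lambda>_. 1"]
    by (simp add: lyapunov_def distrib_left mult.commute[of _ "noise_const * tail_sq s"])
  have "eta t * (\<integral>\<omega>. G \<omega> * excess t \<omega> \<partial>P) \<le> descent_weight t * (\<integral>\<omega>. G \<omega> * excess t \<omega> \<partial>P)"
    using eta_le_descent_weight[OF t] G01 excess_nonneg
    by (intro mult_right_mono integral_nonneg_AE AE_I2) auto
  then show ?thesis
    using expected_dist2_step[OF _ G G01, of] t T0(1) tail_sq_Suc[of t] unfolding lyap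
    by (simp add: algebra_simps)
qed

lemma expected_lyapunov_step:
  "T0 \<le> t \<Longrightarrow> (\<integral>\<omega>. lyapunov (Suc t) \<omega> \<partial>P) \<le> (\<integral>\<omega>. lyapunov t \<omega> \<partial>P) - eta t * (\<integral>\<omega>. excess t \<omega> \<partial>P)"
  using lyapunov_supermartingale[of t "\<lambda>_. 1", OF _ adapted_const] by simp

lemma AE_summable_weighted_excess: "AE \<omega> in P. summable (\<lambda>i. eta (i + T0) * excess (i + T0) \<omega>)"
proof (rule AE_summable_if_summable_integrals)
  have eta: "0 \<le> eta (i + T0)" for i using eta_nonneg T0(1) by simp
  show "integrable P (\<lambda>\<omega>. eta (i + T0) * excess (i + T0) \<omega>)" for i
    using integrable_excess by simp
  show "0 \<le> eta (i + T0) * excess (i + T0) \<omega>" for i \<omega>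
    using eta excess_nonneg by simp
  have Ex_nonneg: "0 \<le> (\<integral>\<omega>. excess t \<omega> \<partial>P)" for t
    using excess_nonneg by (intro integral_nonneg_AE AE_I2) auto
  have Ly_nonneg: "0 \<le> (\<integral>\<omega>. lyapunov t \<omega> \<partial>P)" for t
    using lyapunov_nonneg by (intro integral_nonneg_AE AE_I2) auto
  have partial: "(\<Sum>i<n. eta (i + T0) * (\<integral>\<omega>. excess (i + T0) \<omega> \<partial>P))
      \<le> (\<integral>\<omega>. lyapunov T0 \<omega> \<partial>P) - (\<integral>\<omega>. lyapunov (n + T0) \<omega> \<partial>P)" for n
  proof (induction n)
    case (Suc n)
    then show ?case using expected_lyapunov_step[of "n + T0"] by simp
  qed simp
  show "summable (\<lambda>i. \<integral>\<omega>. eta (i + T0) * excess (i + T0) \<omega> \<partial>P)"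
  proof (rule summableI_nonneg_bounded)
    show "0 \<le> (\<integral>\<omega>. eta (i + T0) * excess (i + T0) \<omega> \<partial>P)" for i
      using eta Ex_nonneg by simp
    show "(\<Sum>i<n. \<integral>\<omega>. eta (i + T0) * excess (i + T0) \<omega> \<partial>P) \<le> (\<integral>\<omega>. lyapunov T0 \<omega> \<partial>P)" for n
      using partial[of n] Ly_nonneg[of "n + T0"] by simp
  qed
qed

lemma AE_lyapunov_bounded: "AE \<omega> in P. \<exists>B. \<forall>t\<ge>T0. lyapunov t \<omega> \<le> B"
proof -
  interpret P: prob_space P by (rule P_prob)
  show ?thesis
  proof (rule P.AE_bounded_if_stopped_decreasing[OF integrable_lyapunov lyapunov_nonneg])
    fix lam :: real and k :: nat
    let ?G = "\<lambda>\<omega>. of_bool (\<forall>s\<in>{T0..T0 + k}. lyapunov s \<omega> < lam) :: real"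
    have "adapted (T0 + k) ?G"
      using adapted_mono[OF adapted_lyapunov] by (intro adapted_all_less) auto
    then have "(\<integral>\<omega>. ?G \<omega> * lyapunov (Suc (T0 + k)) \<omega> \<partial>P)
        \<le> (\<integral>\<omega>. ?G \<omega> * lyapunov (T0 + k) \<omega> \<partial>P) - eta (T0 + k) * (\<integral>\<omega>. ?G \<omega> * excess (T0 + k) \<omega> \<partial>P)"
      by (intro lyapunov_supermartingale) auto
    moreover have "0 \<le> eta (T0 + k) * (\<integral>\<omega>. ?G \<omega> * excess (T0 + k) \<omega> \<partial>P)"
      using eta_nonneg[of "T0 + k"] T0(1) excess_nonneg
      by (intro mult_nonneg_nonneg integral_nonneg_AE AE_I2) auto
    ultimately show "(\<integral>\<omega>. ?G \<omega> * lyapunov (Suc (T0 + k)) \<omega> \<partial>P) \<le> (\<integral>\<omega>. ?G \<omega> * lyapunov (T0 + k) \<omega> \<partial>P)"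
      by linarith
  qed
qed

lemma excess_increment_bound:
  assumes \<omega>: "\<omega> \<in> space P" and t: "T0 \<le> t" and R: "\<And>s. T0 \<le> s \<Longrightarrow> norm (iterate \<omega> s) \<le> R"
  shows "excess (Suc t) \<omega> - excess t \<omega> \<le> (lip (R * kappa) * kappa * (kappa * lip (kappa * R))) * eta t"
proof -
  have t1: "1 \<le> t" using t T0(1) by simp
  have "excess (Suc t) \<omega> - excess t \<omega> \<le> lip (R * kappa) * kappa * norm (iterate \<omega> (Suc t) - iterate \<omega> t)"
    using risk_lipschitz[OF R R, of "Suc t" t] t by (simp add: excess_def)
  also have "norm (iterate \<omega> (Suc t) - iterate \<omega> t) \<le> eta t * kappa * lip (kappa * R)"
  proof -
    have "lip (kappa * norm (iterate \<omega> t)) \<le> lip (kappa * R)"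
      using R[OF t] kappa_nonneg by (intro lip_mono mult_left_mono)
    then show ?thesis
      using ogd_iter_step_norm[of t "\<lambda>i. Z i \<omega>", OF t1 Z_in_XY[OF t1 \<omega>]] eta_nonneg[OF t1] kappa_nonneg
      by (smt (verit) mult_left_mono mult_nonneg_nonneg)
  qed
  finally show ?thesis
    using lip_nonneg[of "R * kappa"] kappa_nonneg R[OF t] norm_ge_zero[of "iterate \<omega> t"]
    by (smt (verit) mult_left_mono mult_nonneg_nonneg mult.assoc mult.commute)
qed

lemma norm_iterate_le_if_lyapunov_le:
  assumes "lyapunov t \<omega> \<le> B"
  shows "norm (iterate \<omega> t) \<le> norm fH + sqrt B"
proof -
  have "dist2 t \<omega> \<le> B"
    using assms noise_const_nonneg tail_sq_nonneg[of t] unfolding lyapunov_def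
    by (smt (verit) mult_nonneg_nonneg)
  then have "norm (iterate \<omega> t - fH) \<le> sqrt B" unfolding dist2_def by (simp add: real_le_rsqrt)
  then show ?thesis using norm_triangle_ineq2[of "iterate \<omega> t" fH] by linarith
qed

lemma AE_risk_tendsto: "AE \<omega> in P. (\<lambda>t. risk (iterate \<omega> t)) \<longlonglongrightarrow> risk fH"
  using AE_lyapunov_bounded AE_summable_weighted_excess AE_space
proof eventually_elim
  case (elim \<omega>)
  then obtain B where B: "\<And>t. T0 \<le> t \<Longrightarrow> lyapunov t \<omega> \<le> B" and \<omega>: "\<omega> \<in> space P"
    and summable: "summable (\<lambda>i. eta (i + T0) * excess (i + T0) \<omega>)" by blast
  define R where "R = norm fH + sqrt B"
  have R: "norm (iterate \<omega> t) \<le> R" if "T0 \<le> t" for t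
    unfolding R_def using B[OF that] by (rule norm_iterate_le_if_lyapunov_le)
  have R_nonneg: "0 \<le> R" using R[of T0] norm_ge_zero order_trans by blast
  define C where "C = lip (R * kappa) * kappa * (kappa * lip (kappa * R)) + 1"
  have "0 < C"
    using lip_nonneg[of "R * kappa"] lip_nonneg[of "kappa * R"] R_nonneg kappa_nonneg
    by (simp add: C_def add_nonneg_pos)
  have "(\<lambda>n. excess (n + T0) \<omega>) \<longlonglongrightarrow> 0"
  proof (rule tendsto_zero_if_weighted_summable[OF excess_nonneg _ summable _ _ \<open>0 < C\<close>])
    show "0 \<le> eta (n + T0)" for n using eta_nonneg T0(1) by simp
    show "\<not> summable (\<lambda>n. eta (n + T0))" using eta_not_summable summable_iff_shift[of eta T0] by simp
    show "(\<lambda>n. eta (n + T0)) \<longlonglongrightarrow> 0" using eta_tendsto_zero by (rule LIMSEQ_ignore_initial_segment)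
    show "excess (Suc n + T0) \<omega> - excess (n + T0) \<omega> \<le> C * eta (n + T0)" for n
      using excess_increment_bound[OF \<omega> _ R, of "n + T0"] eta_nonneg[of "n + T0"] T0(1)
      by (simp add: C_def algebra_simps)
  qed
  then have "(\<lambda>t. excess t \<omega>) \<longlonglongrightarrow> 0" by (rule LIMSEQ_offset)
  then have "(\<lambda>t. excess t \<omega> + risk fH) \<longlonglongrightarrow> 0 + risk fH" by (intro tendsto_intros)
  then show ?case by (simp add: excess_def)
qed

end

theorem theorem3:
  fixes X :: "'a::euclidean_space set" and Y :: "real set"
    and rho :: "('a \<times> real) measure"
    and K :: "'a \<Rightarrow> 'a \<Rightarrow> real" and Phi :: "'a \<Rightarrow> 'h::{real_inner, complete_space}"
    and phi dphi :: "real \<Rightarrow> real \<Rightarrow> real"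
    and alpha L :: real
    and fH :: 'h
    and P :: "'w measure" and Z :: "nat \<Rightarrow> 'w \<Rightarrow> 'a \<times> real"
    and eta :: "nat \<Rightarrow> real"
  assumes rho_space: "space rho = X \<times> Y"
    and rho_sets: "sets rho = sets (restrict_space borel (X \<times> Y))"
    and rho_prob: "prob_space rho"
    and K_feature: "\<forall>x\<in>X. \<forall>x'\<in>X. K x x' = inner (Phi x) (Phi x')"
    and K_cont: "continuous_on (X \<times> X) (\<lambda>(x, x'). K x x')"
    and kappa_fin: "bdd_above ((\<lambda>x. sqrt (K x x)) ` X)"
    and phi_nonneg: "\<forall>y\<in>Y. \<forall>s. 0 \<le> phi y s"
    and phi_meas: "(\<lambda>(y, s). phi y s) \<in> borel_measurable (restrict_space borel (Y \<times> UNIV))"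
    and phi_deriv: "\<forall>y\<in>Y. \<forall>s. (phi y has_real_derivative dphi y s) (at s)"
    and phi_convex: "\<forall>y\<in>Y. convex_on UNIV (phi y)"
    and alpha: "0 < alpha" "alpha \<le> 1" and L_pos: "0 < L"
    and holder: "\<forall>y\<in>Y. \<forall>s s'. \<bar>dphi y s - dphi y s'\<bar> \<le> L * \<bar>s - s'\<bar> powr alpha"
    and fH_min: "\<forall>h. gen_err rho phi (rkhs_fun Phi fH) \<le> gen_err rho phi (rkhs_fun Phi h)"
    and phi0_bdd: "bdd_above ((\<lambda>y. phi y 0) ` Y)"
    and phifH_bdd: "bdd_above ((\<lambda>(x, y). phi y (rkhs_fun Phi fH x)) ` (X \<times> Y))"
    and P_prob: "prob_space P"
    and Z_indep: "prob_space.indep_vars P (\<lambda>_. rho) Z {1..}"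
    and Z_distr: "\<forall>t\<ge>1. distr P rho (Z t) = rho"
    and eta_pos: "\<forall>t\<ge>1. 0 < eta t"
    and eta_div: "\<not> summable (\<lambda>t. eta (t + 1))"
    and eta_sum: "summable (\<lambda>t. eta (t + 1) powr (1 + alpha))"
  shows "AE \<omega> in P.
           (\<lambda>t. gen_err rho phi (rkhs_fun Phi (ogd Phi dphi eta (\<lambda>i. Z i \<omega>) t)))
             \<longlonglongrightarrow> gen_err rho phi (rkhs_fun Phi fH)"
  proof -
  interpret ogd_setting X Y rho K Phi phi dphi alpha L fH P Z eta
    unfolding ogd_setting_def using assms by (intro conjI) assumption+
  from AE_risk_tendsto show ?thesis by (simp add: risk_def)
qed

end
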